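(* Let $(C,S)$ be a partially shaded tree, where $C$ is the support tree of a vertex of a non-degenerate transportation polytope $\mathrm{TP}(u,v)$, and assume: (1) (UNO) holds in $(C,S)$; (2) no shaded $+$edge is incident to an open supply node; (3) a supply node $\sigma$ satisfies (SIN) in $(C,S)$. Choose an edge $e=\{\sigma,\delta\}$ incident to $\sigma$ as follows: if there is a $-$edge of $F$ incident to $\sigma$ not yet in $S$, let $e$ be one such edge; otherwise let $e$ be the unique $+$edge of $F$ incident to $\sigma$. (Insert and) shade $e$ to obtain the succeeding partially shaded tree $(\hat C,\hat S)$. Then exactly one of the following holds: (i) if $\delta^*$ is well-connected in $(\hat C,\hat S)$, then $(\hat C,\hat S)$ is fully shaded, i.e. $\hat C=F$ and all its edges are shaded; (ii) otherwise, $(\hat C,\hat S)$ is not fully shaded, (UNO) holds in $(\hat C,\hat S)$, and there is an open supply node satisfying (SIN) in $(\hat C,\hat S)$; such a node is obtained as follows: let $\delta'$ be the demand node of the deleted edge if $e$ was inserted, and $\delta'=\delta$ if $e$ was only shaded; if $\hat C$ contains an unshaded edge $\{\sigma',\delta'\}$, take $\sigma'$; otherwise take the supply node $\sigma''$ of the unique $-$edge $\{\sigma'',\delta'\}$ incident to $\delta'$.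
   Context: Let $N_1,N_2\ge1$, $u\in\mathbb{R}_{>0}^{N_1}$, $v\in\mathbb{R}_{>0}^{N_2}$ with $\sum_iu_i=\sum_jv_j$, and $\mathrm{TP}(u,v)=\{y\in\mathbb{R}^{N_1\times N_2}: \sum_j y_{ij}=u_i\ \forall i,\ \sum_i y_{ij}=v_j\ \forall j,\ y\ge 0\}$. Supply nodes $\sigma^1,\dots,\sigma^{N_1}$ and demand nodes $\delta^1,\dots,\delta^{N_2}$ form $K_{N_1,N_2}$; the support graph of $y$ consists of edges $\{\sigma^i,\delta^j\}$ with $y_{ij}>0$. $\mathrm{TP}(u,v)$ is non-degenerate if there are no nonempty proper $I\subsetneq\{1,\dots,N_1\}$, $J\subsetneq\{1,\dots,N_2\}$ with $\sum_{i\in I}u_i=\sum_{j\in J}v_j$; then each vertex's support graph is a spanning tree of $K_{N_1,N_2}$ determining the vertex (called a tree). Pivot: for a tree $C$ and an edge $e\notin C$, $C\cup\{e\}$ contains a unique cycle; alternately increasing (starting at $e$) and decreasing flow along it by the largest feasible amount yields an adjacent vertex whose tree is $C\cup\{e\}$ minus exactly one edge of the cycle (the deleted edge, determined by the margins). Fix a tree $F$ and a demand node $\delta^*$; label edges of $F$ alternately $+,-,+,\dots$ along paths in $F$ starting at $\delta^*$, beginning with $+$ (each supply node is incident in $F$ to exactly one $+$edge; each demand node other than $\delta^*$ to exactly one $-$edge; $\delta^*$ only to $+$edges). A partially shaded tree is $(C,S)$ with $C$ a tree and $S\subseteq C\cap F$ the shaded edges (others unshaded); shaded edges carry their $F$-labels;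 it is fully shaded if $S=C$. (Inserting and) shading an edge $e\in F\setminus S$: if $e\in C$, set $\hat C=C$ and shade $e$; if $e\notin C$, let $\hat C$ be the tree obtained by pivoting $e$ into $C$ and shade $e$; $\hat S$ is $S\cup\{e\}$ (minus the deleted edge if it was shaded). A supply node is well-connected if all edges of $F$ incident to it are shaded edges of the current tree, otherwise open; a demand node is well-connected if it is incident to no unshaded edge of the current tree, otherwise open. A well-connected edge is a shaded edge incident to a well-connected node. Well-connected components: connected components of the graph on all nodes with the well-connected edges as edges. (UNO) holds if every well-connected component contains exactly one open node. For a supply node $\sigma$, number the edges of the current tree along paths starting at $\sigma$ (edges at $\sigma$ get $1$); an edge is odd w.r.t. $\sigma$ if its number is odd. $\sigma$ satisfies (SIN) if every odd edge w.r.t. $\sigma$ is unshaded or a shaded $-$edge incident to a well-connected demand node. *)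

theory Defs
  imports Complex_Main
begin

text \<open>Supply indices are 0..<N1, demand indices 0..<N2.
  An edge {sigma^i, delta^j} of K_{N1,N2} is represented by the pair (i, j).\<close>

definition TP :: "nat \<Rightarrow> nat \<Rightarrow> (nat \<Rightarrow> real) \<Rightarrow> (nat \<Rightarrow> real) \<Rightarrow> (nat \<Rightarrow> nat \<Rightarrow> real) set" where
  "TP N1 N2 u v = {y. (\<forall>i<N1. (\<Sum>j<N2. y i j) = u i) \<and> (\<forall>j<N2. (\<Sum>i<N1. y i j) = v j)
       \<and> (\<forall>i j. 0 \<le> y i j) \<and> (\<forall>i j. \<not> (i < N1 \<and> j < N2) \<longrightarrow> y i j = 0)}"

definition non_degenerate :: "nat \<Rightarrow> nat \<Rightarrow> (nat \<Rightarrow> real) \<Rightarrow> (nat \<Rightarrow> real) \<Rightarrow> bool" where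
  "non_degenerate N1 N2 u v \<longleftrightarrow>
     \<not> (\<exists>I J. I \<noteq> {} \<and> I \<subset> {..<N1} \<and> J \<noteq> {} \<and> J \<subset> {..<N2} \<and> sum u I = sum v J)"

definition is_vertex :: "nat \<Rightarrow> nat \<Rightarrow> (nat \<Rightarrow> real) \<Rightarrow> (nat \<Rightarrow> real) \<Rightarrow> (nat \<Rightarrow> nat \<Rightarrow> real) \<Rightarrow> bool" where
  "is_vertex N1 N2 u v y \<longleftrightarrow> y \<in> TP N1 N2 u v \<and>
     (\<forall>a\<in>TP N1 N2 u v. \<forall>b\<in>TP N1 N2 u v. (\<forall>i j. y i j = (a i j + b i j) / 2) \<longrightarrow> a = b)"

definition supp :: "(nat \<Rightarrow> nat \<Rightarrow> real) \<Rightarrow> (nat \<times> nat) set" where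
  "supp y = {(i, j). y i j \<noteq> 0}"

definition vertex_tree :: "nat \<Rightarrow> nat \<Rightarrow> (nat \<Rightarrow> real) \<Rightarrow> (nat \<Rightarrow> real) \<Rightarrow> (nat \<times> nat) set \<Rightarrow> bool" where
  "vertex_tree N1 N2 u v C \<longleftrightarrow> (\<exists>y. is_vertex N1 N2 u v y \<and> supp y = C)"

text \<open>Pivot of edge e into tree C giving tree C': take the vertex y with support C, the
  direction d which is +1/-1 alternately along the unique cycle of C \<union> {e} (starting with
  +1 at e), i.e. d supported in C \<union> {e}, d e = 1, zero margins, and move by the largest
  feasible amount t.\<close>
definition pivot :: "nat \<Rightarrow> nat \<Rightarrow> (nat \<Rightarrow> real) \<Rightarrow> (nat \<Rightarrow> real) \<Rightarrow> (nat \<times> nat) set \<Rightarrow> nat \<times> nat \<Rightarrow> (nat \<times> nat) set \<Rightarrow> bool" where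
  "pivot N1 N2 u v C e C' \<longleftrightarrow>
     (\<exists>y d t. is_vertex N1 N2 u v y \<and> supp y = C \<and>
        supp d \<subseteq> insert e C \<and> d (fst e) (snd e) = 1 \<and>
        (\<forall>i j. d i j \<in> {-1, 0, 1}) \<and>
        (\<forall>i<N1. (\<Sum>j<N2. d i j) = 0) \<and> (\<forall>j<N2. (\<Sum>i<N1. d i j) = 0) \<and>
        0 \<le> t \<and> (\<forall>i j. 0 \<le> y i j + t * d i j) \<and>
        (\<forall>s>t. \<not> (\<forall>i j. 0 \<le> y i j + s * d i j)) \<and>
        C' = supp (\<lambda>i j. y i j + t * d i j))"

definition shade :: "nat \<Rightarrow> nat \<Rightarrow> (nat \<Rightarrow> real) \<Rightarrow> (nat \<Rightarrow> real) \<Rightarrow> (nat \<times> nat) set \<Rightarrow>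
    (nat \<times> nat) set \<Rightarrow> (nat \<times> nat) set \<Rightarrow> nat \<times> nat \<Rightarrow> (nat \<times> nat) set \<Rightarrow> (nat \<times> nat) set \<Rightarrow> bool" where
  "shade N1 N2 u v F C S e C' S' \<longleftrightarrow> e \<in> F \<and> e \<notin> S \<and>
     (if e \<in> C then C' = C \<and> S' = insert e S
      else pivot N1 N2 u v C e C' \<and> S' = insert e S - (C - C'))"

datatype node = Sup nat | Dem nat

definition nodes :: "nat \<Rightarrow> nat \<Rightarrow> node set" where
  "nodes N1 N2 = Sup ` {..<N1} \<union> Dem ` {..<N2}"

definition adj :: "(nat \<times> nat) set \<Rightarrow> node \<Rightarrow> node \<Rightarrow> bool" where
  "adj E a b \<longleftrightarrow> (\<exists>i j. (i, j) \<in> E \<and> ((a = Sup i \<and> b = Dem j) \<or> (a = Dem j \<and> b = Sup i)))"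

definition gdist :: "(nat \<times> nat) set \<Rightarrow> node \<Rightarrow> node \<Rightarrow> nat" where
  "gdist E a b = (LEAST n. (adj E ^^ n) a b)"

text \<open>Number of an edge when numbering along paths starting at the root r (edges at r get 1).\<close>
definition edge_num :: "(nat \<times> nat) set \<Rightarrow> node \<Rightarrow> nat \<times> nat \<Rightarrow> nat" where
  "edge_num E r e = max (gdist E r (Sup (fst e))) (gdist E r (Dem (snd e)))"

definition plus_edge :: "(nat \<times> nat) set \<Rightarrow> nat \<Rightarrow> nat \<times> nat \<Rightarrow> bool" where
  "plus_edge F ds e \<longleftrightarrow> e \<in> F \<and> odd (edge_num F (Dem ds) e)"

definition minus_edge :: "(nat \<times> nat) set \<Rightarrow> nat \<Rightarrow> nat \<times> nat \<Rightarrow> bool" where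
  "minus_edge F ds e \<longleftrightarrow> e \<in> F \<and> even (edge_num F (Dem ds) e)"

definition well_connected :: "(nat \<times> nat) set \<Rightarrow> (nat \<times> nat) set \<Rightarrow> (nat \<times> nat) set \<Rightarrow> node \<Rightarrow> bool" where
  "well_connected F C S x \<longleftrightarrow> (case x of
      Sup i \<Rightarrow> (\<forall>j. (i, j) \<in> F \<longrightarrow> (i, j) \<in> C \<and> (i, j) \<in> S)
    | Dem j \<Rightarrow> (\<forall>i. (i, j) \<in> C \<longrightarrow> (i, j) \<in> S))"

definition open_node :: "nat \<Rightarrow> nat \<Rightarrow> (nat \<times> nat) set \<Rightarrow> (nat \<times> nat) set \<Rightarrow> (nat \<times> nat) set \<Rightarrow> node \<Rightarrow> bool" where
  "open_node N1 N2 F C S x \<longleftrightarrow> x \<in> nodes N1 N2 \<and> \<not> well_connected F C S x"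

definition wc_edges :: "(nat \<times> nat) set \<Rightarrow> (nat \<times> nat) set \<Rightarrow> (nat \<times> nat) set \<Rightarrow> (nat \<times> nat) set" where
  "wc_edges F C S = {(i, j) \<in> S. well_connected F C S (Sup i) \<or> well_connected F C S (Dem j)}"

definition UNO :: "nat \<Rightarrow> nat \<Rightarrow> (nat \<times> nat) set \<Rightarrow> (nat \<times> nat) set \<Rightarrow> (nat \<times> nat) set \<Rightarrow> bool" where
  "UNO N1 N2 F C S \<longleftrightarrow> (\<forall>x\<in>nodes N1 N2. \<exists>!y. (adj (wc_edges F C S))\<^sup>*\<^sup>* x y \<and> open_node N1 N2 F C S y)"

definition odd_edge :: "(nat \<times> nat) set \<Rightarrow> nat \<Rightarrow> nat \<times> nat \<Rightarrow> bool" where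
  "odd_edge C i e \<longleftrightarrow> e \<in> C \<and> odd (edge_num C (Sup i) e)"

definition SIN :: "(nat \<times> nat) set \<Rightarrow> nat \<Rightarrow> (nat \<times> nat) set \<Rightarrow> (nat \<times> nat) set \<Rightarrow> nat \<Rightarrow> bool" where
  "SIN F ds C S i \<longleftrightarrow> (\<forall>e. odd_edge C i e \<longrightarrow>
      e \<notin> S \<or> (minus_edge F ds e \<and> well_connected F C S (Dem (snd e))))"

end

theory Submission
  imports Defs "HOL-Library.Transitive_Closure_Table" "HOL-Library.Function_Algebras"
begin

text \<open>Orient \<open>F\<close> away from \<open>\<delta>\<^sup>*\<close>. Two invariants drive the proof: every shaded \<open>+\<close>edge has a
  well-connected supply node (hypothesis (2)), and a shaded \<open>-\<close>edge at a well-connected supply node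
  ends in a well-connected demand node (a consequence of (SIN)); both survive the step. Starting
  from a well-connected node and moving away from \<open>\<delta>\<^sup>*\<close> along shaded edges through well-connected
  nodes, the invariants make the reached set closed under the edges of \<open>F\<close> and of the current tree,
  so by non-degeneracy it is all nodes. This yields (UNO) and, once \<open>\<delta>\<^sup>*\<close> is well-connected, the
  full shading. A pivot never deletes a shaded edge, by comparing the flows of the two vertices and
  of the pivot direction across a cut built the same way. Finally (SIN) at the new supply node is
  checked by relating the odd edges of the new tree, seen from it, to the odd edges of the old tree
  seen from \<open>\<sigma>\<close>.\<close>

section \<open>Reachability in bipartite edge sets\<close>

abbreviation reach :: "(nat \<times> nat) set \<Rightarrow> node \<Rightarrow> node \<Rightarrow> bool" where
  "reach E \<equiv> (adj E)\<^sup>*\<^sup>*"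

fun is_supply :: "node \<Rightarrow> bool" where
  "is_supply (Sup _) = True" | "is_supply (Dem _) = False"

lemma adj_Sup_Dem [simp]: "adj E (Sup a) (Dem b) \<longleftrightarrow> (a, b) \<in> E"
  and adj_Dem_Sup [simp]: "adj E (Dem b) (Sup a) \<longleftrightarrow> (a, b) \<in> E"
  and adj_Sup_Sup [simp]: "\<not> adj E (Sup a) (Sup a')"
  and adj_Dem_Dem [simp]: "\<not> adj E (Dem b) (Dem b')"
  by (auto simp: adj_def)

lemma adj_sym: "adj E x y \<Longrightarrow> adj E y x"
  by (auto simp: adj_def)

lemma adj_mono: "adj E x y \<Longrightarrow> E \<subseteq> E' \<Longrightarrow> adj E' x y"
  by (auto simp: adj_def)

lemma adj_is_supply: "adj E x y \<Longrightarrow> is_supply x \<longleftrightarrow> \<not> is_supply y"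
  by (auto simp: adj_def)

lemma adj_nodes:
  "E \<subseteq> {..<N1} \<times> {..<N2} \<Longrightarrow> adj E x y \<Longrightarrow> x \<in> nodes N1 N2 \<and> y \<in> nodes N1 N2"
  by (auto simp: adj_def nodes_def)

lemma reach_sym: "reach E x y \<Longrightarrow> reach E y x"
  by (induction rule: rtranclp_induct) (auto intro: converse_rtranclp_into_rtranclp adj_sym)

lemma reach_mono: "reach E x y \<Longrightarrow> E \<subseteq> E' \<Longrightarrow> reach E' x y"
  by (induction rule: rtranclp_induct) (auto intro: rtranclp.rtrancl_into_rtrancl adj_mono)

lemma reach_step: "reach E x y \<Longrightarrow> adj E y z \<Longrightarrow> reach E x z"
  by (rule rtranclp.rtrancl_into_rtrancl)

lemma reach_nodes:
  "reach E x y \<Longrightarrow> E \<subseteq> {..<N1} \<times> {..<N2} \<Longrightarrow> x \<in> nodes N1 N2 \<Longrightarrow> y \<in> nodes N1 N2"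
  by (induction rule: rtranclp_induct) (auto dest: adj_nodes)

lemma relpow_adj_parity: "(adj E ^^ n) x y \<Longrightarrow> (is_supply x \<longleftrightarrow> is_supply y) \<longleftrightarrow> even n"
proof (induction n arbitrary: y)
  case (Suc n)
  then obtain z where "(adj E ^^ n) x z" "adj E z y" by auto
  with Suc.IH[of z] adj_is_supply[of E z y] show ?case by auto
qed simp

lemma reach_avoid_Sup:
  assumes "reach E x y" "\<not> reach E x (Sup a)"
  shows "reach (E - {(a, b)}) x y"
  using assms
proof (induction rule: rtranclp_induct)
  case (step w z)
  have "z \<noteq> Sup a" "w \<noteq> Sup a" using step reach_step by blast+
  then have "adj (E - {(a, b)}) w z" using step(2) by (auto simp: adj_def)
  then show ?case using step reach_step by blast
qed simp

lemma reach_without_edge_cases: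
  assumes "reach E x y"
  shows "reach (E - {(a, b)}) x y \<or> reach (E - {(a, b)}) x (Sup a) \<or> reach (E - {(a, b)}) x (Dem b)"
  using assms
proof (induction rule: rtranclp_induct)
  case (step w z)
  show ?case
  proof (cases "adj (E - {(a, b)}) w z")
    case True then show ?thesis using step reach_step by blast
  next
    case False
    then have "(w = Sup a \<and> z = Dem b) \<or> (w = Dem b \<and> z = Sup a)"
      using step(2) by (auto simp: adj_def)
    then show ?thesis using step by blast
  qed
qed simp

lemma gdist_relpow: "reach E x y \<Longrightarrow> (adj E ^^ gdist E x y) x y"
  unfolding gdist_def by (meson LeastI rtranclp_imp_relpowp)

lemma gdist_le: "(adj E ^^ n) x y \<Longrightarrow> gdist E x y \<le> n"
  unfolding gdist_def by (rule Least_le)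

lemma gdist_self [simp]: "gdist E x x = 0"
  using gdist_le[of 0 E x x] by simp

lemma gdist_eq_0: "reach E x y \<Longrightarrow> gdist E x y = 0 \<Longrightarrow> y = x"
  using gdist_relpow by fastforce

lemma gdist_parity: "reach E x y \<Longrightarrow> (is_supply x \<longleftrightarrow> is_supply y) \<longleftrightarrow> even (gdist E x y)"
  using gdist_relpow relpow_adj_parity by blast

lemma gdist_adj_le: "reach E x y \<Longrightarrow> adj E y z \<Longrightarrow> gdist E x z \<le> gdist E x y + 1"
  by (metis Suc_eq_plus1 gdist_le gdist_relpow relpowp_Suc_I)

lemma gdist_adj:
  assumes "reach E x y" "adj E y z"
  shows "gdist E x z = gdist E x y + 1 \<or> gdist E x y = gdist E x z + 1"
proof -
  have xz: "reach E x z" using assms reach_step by blast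
  have "gdist E x z \<le> gdist E x y + 1" "gdist E x y \<le> gdist E x z + 1"
    using gdist_adj_le[OF assms] gdist_adj_le[OF xz adj_sym[OF assms(2)]] by auto
  moreover have "even (gdist E x y) \<longleftrightarrow> odd (gdist E x z)"
    using gdist_parity[OF assms(1)] gdist_parity[OF xz] adj_is_supply[OF assms(2)] by blast
  ultimately show ?thesis by presburger
qed

lemma gdist_predecessor:
  assumes "reach E x y" "y \<noteq> x"
  obtains w where "adj E w y" "gdist E x w + 1 = gdist E x y" "reach E x w"
proof -
  obtain n where n: "gdist E x y = Suc n"
    using gdist_eq_0[OF assms(1)] assms(2) by (cases "gdist E x y") auto
  with gdist_relpow[OF assms(1)] obtain w where w: "(adj E ^^ n) x w" "adj E w y" by auto
  have "reach E x w" using w(1) relpowp_imp_rtranclp by metis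
  moreover have "gdist E x w \<le> n" using gdist_le[OF w(1)] .
  moreover have "gdist E x y \<le> gdist E x w + 1" using gdist_adj_le calculation(1) w(2) by blast
  ultimately show thesis using that w n by simp
qed

lemma walk_avoids_far_edges:
  assumes "(adj E ^^ k) x z" "k \<le> m"
    and "\<And>a b. (a, b) \<in> H \<Longrightarrow> gdist E x (Sup a) > m \<or> gdist E x (Dem b) > m"
  shows "reach (E - H) x z"
  using assms(1,2)
proof (induction k arbitrary: z)
  case (Suc k)
  then obtain w where w: "(adj E ^^ k) x w" "adj E w z" by auto
  have "gdist E x w \<le> k" "gdist E x z \<le> Suc k"
    using gdist_le w(1) Suc.prems(1) by blast+
  then have "adj (E - H) w z"
    using w(2) Suc.prems(2) by (auto simp: adj_def dest!: assms(3))
  moreover have "reach (E - H) x w" using Suc w by simp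
  ultimately show ?case using reach_step by blast
qed simp

section \<open>Spanning trees of \<open>K\<^sub>N\<^sub>1\<^sub>,\<^sub>N\<^sub>2\<close>\<close>

lemma card_nodes: "card (nodes N1 N2) = N1 + N2"
proof -
  have "card (Sup ` {..<N1}) = N1" "card (Dem ` {..<N2}) = N2"
    by (simp_all add: card_image inj_on_def)
  moreover have "Sup ` {..<N1} \<inter> Dem ` {..<N2} = {}" by auto
  ultimately show ?thesis unfolding nodes_def by (simp add: card_Un_disjoint)
qed

lemma Sup_in_nodes [simp]: "Sup a \<in> nodes N1 N2 \<longleftrightarrow> a < N1"
  and Dem_in_nodes [simp]: "Dem b \<in> nodes N1 N2 \<longleftrightarrow> b < N2"
  by (auto simp: nodes_def)

definition joins :: "nat \<times> nat \<Rightarrow> node \<Rightarrow> node \<Rightarrow> bool" where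
  "joins g x w \<longleftrightarrow> (x = Sup (fst g) \<and> w = Dem (snd g)) \<or> (x = Dem (snd g) \<and> w = Sup (fst g))"

lemma adj_iff_joins: "adj E w x \<longleftrightarrow> (\<exists>g\<in>E. joins g x w)"
  unfolding adj_def joins_def by force

lemma joins_same_edge: "joins g x w \<Longrightarrow> joins g z w' \<Longrightarrow> (x = z \<and> w = w') \<or> (x = w' \<and> w = z)"
  by (cases g) (auto simp: joins_def)

text \<open>The edge from \<open>x\<close> to a node one step closer to the root \<open>r\<close>; distinct nodes get distinct
  parent edges, which gives the lower bound on the number of edges of a connected graph.\<close>
definition parent_edge :: "(nat \<times> nat) set \<Rightarrow> node \<Rightarrow> node \<Rightarrow> nat \<times> nat" where
  "parent_edge E r x = (SOME g. g \<in> E \<and> (\<exists>w. joins g x w \<and> gdist E r w + 1 = gdist E r x))"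

lemma parent_edge:
  assumes "reach E r x" "x \<noteq> r"
  shows "parent_edge E r x \<in> E \<and> (\<exists>w. joins (parent_edge E r x) x w \<and> gdist E r w + 1 = gdist E r x)"
proof -
  obtain w where "adj E w x" "gdist E r w + 1 = gdist E r x"
    using gdist_predecessor[OF assms] by blast
  then obtain g where "g \<in> E" "joins g x w" using adj_iff_joins by metis
  then have "\<exists>g. g \<in> E \<and> (\<exists>w. joins g x w \<and> gdist E r w + 1 = gdist E r x)"
    using \<open>gdist E r w + 1 = gdist E r x\<close> by blast
  then show ?thesis unfolding parent_edge_def by (rule someI_ex)
qed

lemma inj_on_parent_edge:
  assumes "\<forall>x\<in>X. reach E r x" "r \<notin> X"
  shows "inj_on (parent_edge E r) X"
proof
  fix x z assume x: "x \<in> X" and z: "z \<in> X" and eq: "parent_edge E r x = parent_edge E r z"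
  obtain w where w: "joins (parent_edge E r x) x w" "gdist E r w + 1 = gdist E r x"
    using parent_edge assms x by blast
  obtain w' where w': "joins (parent_edge E r z) z w'" "gdist E r w' + 1 = gdist E r z"
    using parent_edge assms z by blast
  from joins_same_edge[OF w(1) w'(1)[folded eq]] w w' show "x = z" by auto
qed

lemma parent_edge_image:
  assumes "\<forall>x\<in>nodes N1 N2. reach E r x"
  shows "inj_on (parent_edge E r) (nodes N1 N2 - {r})"
    and "parent_edge E r ` (nodes N1 N2 - {r}) \<subseteq> E"
proof -
  show "inj_on (parent_edge E r) (nodes N1 N2 - {r})"
    by (rule inj_on_parent_edge) (use assms in auto)
  show "parent_edge E r ` (nodes N1 N2 - {r}) \<subseteq> E"
    using parent_edge assms by blast
qed

lemma connected_card_edges_ge: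
  assumes "E \<subseteq> {..<N1} \<times> {..<N2}" "r \<in> nodes N1 N2" "\<forall>x\<in>nodes N1 N2. reach E r x"
  shows "N1 + N2 - 1 \<le> card E"
proof -
  have "finite E" using assms(1) by (rule finite_subset) simp
  moreover have "card (nodes N1 N2 - {r}) = N1 + N2 - 1" using card_nodes assms(2) by simp
  ultimately show ?thesis
    using card_inj_on_le[OF parent_edge_image[OF assms(3)]] by simp
qed

definition spanning_tree :: "nat \<Rightarrow> nat \<Rightarrow> (nat \<times> nat) set \<Rightarrow> bool" where
  "spanning_tree N1 N2 T \<longleftrightarrow> T \<subseteq> {..<N1} \<times> {..<N2} \<and>
     (\<forall>x\<in>nodes N1 N2. \<forall>y\<in>nodes N1 N2. reach T x y) \<and> card T = N1 + N2 - 1"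

context
  fixes N1 N2 :: nat and T :: "(nat \<times> nat) set"
  assumes T: "spanning_tree N1 N2 T"
begin

lemma spanning_tree_subset: "T \<subseteq> {..<N1} \<times> {..<N2}"
  using T unfolding spanning_tree_def by simp

lemma spanning_tree_finite: "finite T"
  using spanning_tree_subset by (rule finite_subset) simp

lemma spanning_tree_reach: "x \<in> nodes N1 N2 \<Longrightarrow> y \<in> nodes N1 N2 \<Longrightarrow> reach T x y"
  using T unfolding spanning_tree_def by simp

lemma spanning_tree_edge_range: "(a, b) \<in> T \<Longrightarrow> a < N1 \<and> b < N2"
  using spanning_tree_subset by auto

lemma spanning_tree_unique_parent:
  assumes r: "r \<in> nodes N1 N2"
    and w1: "adj T w1 x" "gdist T r w1 + 1 = gdist T r x"
    and w2: "adj T w2 x" "gdist T r w2 + 1 = gdist T r x"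
  shows "w1 = w2"
proof -
  have reach_r: "\<forall>z\<in>nodes N1 N2. reach T r z" using spanning_tree_reach r by blast
  note inj = parent_edge_image(1)[OF reach_r] and sub = parent_edge_image(2)[OF reach_r]
  have "card (parent_edge T r ` (nodes N1 N2 - {r})) = card T"
    using card_image[OF inj] card_nodes r T unfolding spanning_tree_def by simp
  then have onto: "parent_edge T r ` (nodes N1 N2 - {r}) = T"
    using card_subset_eq[OF spanning_tree_finite sub] by simp
  \<comment> \<open>every edge is a parent edge, so the edge to a lower neighbour of \<open>x\<close> is the parent edge of \<open>x\<close>\<close>
  have joins_parent: "joins (parent_edge T r x) x w"
    if wx: "adj T w x" and lvl: "gdist T r w + 1 = gdist T r x" for w
  proof -
    obtain g where g: "g \<in> T" "joins g x w" using wx unfolding adj_iff_joins by blast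
    obtain z where z: "z \<in> nodes N1 N2 - {r}" "g = parent_edge T r z" using onto g(1) by blast
    obtain w' where w': "joins (parent_edge T r z) z w'" "gdist T r w' + 1 = gdist T r z"
      using parent_edge reach_r z(1) by blast
    from joins_same_edge[OF g(2) w'(1)[folded z(2)]] lvl w'(2) have "z = x" by auto
    then show ?thesis using g z by simp
  qed
  from joins_same_edge[OF joins_parent[OF w1] joins_parent[OF w2]] w1(2) w2(2) show ?thesis by auto
qed

lemma reach_without_tree_edge:
  assumes "reach T x z" "reach (T - {(a, b)}) y (Sup a)" "reach (T - {(a, b)}) y (Dem b)"
    "reach (T - {(a, b)}) y x"
  shows "reach (T - {(a, b)}) y z"
  using assms(1)
proof (induction rule: rtranclp_induct)
  case base then show ?case using assms(4) .
next
  case (step w z)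
  show ?case
  proof (cases "adj (T - {(a, b)}) w z")
    case True then show ?thesis using step reach_step by blast
  next
    case False
    then have "z = Sup a \<or> z = Dem b" using step(2) by (auto simp: adj_def)
    then show ?thesis using assms by blast
  qed
qed

lemma spanning_tree_bridge:
  assumes h: "(a, b) \<in> T"
  shows "\<not> reach (T - {(a, b)}) (Sup a) (Dem b)"
proof
  assume r: "reach (T - {(a, b)}) (Sup a) (Dem b)"
  have ab: "a < N1" "b < N2" using spanning_tree_edge_range[OF h] by auto
  have "\<forall>x\<in>nodes N1 N2. reach (T - {(a, b)}) (Sup a) x"
  proof
    fix x assume "x \<in> nodes N1 N2"
    then have "reach T (Sup a) x" using spanning_tree_reach ab by simp
    then show "reach (T - {(a, b)}) (Sup a) x"
      by (rule reach_without_tree_edge[OF _ _ r]) auto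
  qed
  then have "N1 + N2 - 1 \<le> card (T - {(a, b)})"
    using connected_card_edges_ge[of "T - {(a, b)}" N1 N2 "Sup a"] ab spanning_tree_subset by auto
  moreover have "card (T - {(a, b)}) = card T - 1"
    using h spanning_tree_finite by simp
  moreover have "card T \<ge> 1"
    using h spanning_tree_finite card_0_eq by fastforce
  ultimately show False using T unfolding spanning_tree_def by linarith
qed

lemma spanning_tree_side_unique:
  "(a, b) \<in> T \<Longrightarrow> \<not> (reach (T - {(a, b)}) x (Sup a) \<and> reach (T - {(a, b)}) x (Dem b))"
  using spanning_tree_bridge reach_sym rtranclp_trans by metis

lemma spanning_tree_two_sides:
  assumes h: "(a, b) \<in> T" and z: "z \<in> nodes N1 N2"
  shows "reach (T - {(a, b)}) (Sup a) z \<or> reach (T - {(a, b)}) (Dem b) z"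
proof -
  have "reach T (Sup a) z" using spanning_tree_reach spanning_tree_edge_range[OF h] z by simp
  then show ?thesis
  proof (induction rule: rtranclp_induct)
    case base then show ?case by simp
  next
    case (step w z)
    show ?case
    proof (cases "adj (T - {(a, b)}) w z")
      case True then show ?thesis using step reach_step by blast
    next
      case False
      then have "z = Sup a \<or> z = Dem b" using step(2) by (auto simp: adj_def)
      then show ?thesis by auto
    qed
  qed
qed

lemma spanning_tree_side_level:
  assumes h: "(a, b) \<in> T" and r: "r \<in> nodes N1 N2"
  shows "gdist T r (Dem b) = gdist T r (Sup a) + 1 \<longleftrightarrow> reach (T - {(a, b)}) r (Sup a)"
    and "gdist T r (Sup a) = gdist T r (Dem b) + 1 \<longleftrightarrow> reach (T - {(a, b)}) r (Dem b)"
proof -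
  have ab: "a < N1" "b < N2" using spanning_tree_edge_range[OF h] by auto
  have ra: "reach T r (Sup a)" and rb: "reach T r (Dem b)" using spanning_tree_reach r ab by auto
  have lv: "gdist T r (Dem b) = gdist T r (Sup a) + 1 \<or> gdist T r (Sup a) = gdist T r (Dem b) + 1"
    using gdist_adj[OF ra] h by simp
  have A: "gdist T r (Dem b) = gdist T r (Sup a) + 1 \<Longrightarrow> reach (T - {(a, b)}) r (Sup a)"
    by (rule walk_avoids_far_edges[OF gdist_relpow[OF ra] order_refl]) auto
  have B: "gdist T r (Sup a) = gdist T r (Dem b) + 1 \<Longrightarrow> reach (T - {(a, b)}) r (Dem b)"
    by (rule walk_avoids_far_edges[OF gdist_relpow[OF rb] order_refl]) auto
  note nb = spanning_tree_side_unique[OF h, of r]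
  show "gdist T r (Dem b) = gdist T r (Sup a) + 1 \<longleftrightarrow> reach (T - {(a, b)}) r (Sup a)"
    using A B nb lv by auto
  show "gdist T r (Sup a) = gdist T r (Dem b) + 1 \<longleftrightarrow> reach (T - {(a, b)}) r (Dem b)"
    using A B nb lv by auto
qed

lemma reach_in_subgraph_without_edge:
  assumes h: "(a, b) \<in> T" and ET: "E \<subseteq> T"
    and r1: "reach E x w" and r2: "reach (T - {(a, b)}) x w" and w: "w = Sup a \<or> w = Dem b"
  shows "reach (E - {(a, b)}) x w"
proof -
  have br: "\<not> reach (T - {(a, b)}) (Sup a) (Dem b)" using spanning_tree_bridge[OF h] .
  have mono: "reach (E - {(a, b)}) x p \<Longrightarrow> reach (T - {(a, b)}) x p" for p
    using reach_mono ET by blast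
  from reach_without_edge_cases[OF r1, of a b] show ?thesis
  proof (elim disjE)
    assume "reach (E - {(a, b)}) x (Sup a)"
    then show ?thesis using w mono r2 br reach_sym rtranclp_trans by metis
  next
    assume "reach (E - {(a, b)}) x (Dem b)"
    then show ?thesis using w mono r2 br reach_sym rtranclp_trans by metis
  qed simp
qed

lemma odd_edge_iff_reach:
  assumes i: "i < N1"
  shows "odd_edge T i g \<longleftrightarrow> g \<in> T \<and> reach (T - {g}) (Sup i) (Sup (fst g))"
proof (cases "g \<in> T")
  case True
  obtain a b where g: "g = (a, b)" by (cases g)
  have ab: "a < N1" "b < N2" using spanning_tree_edge_range True g by auto
  have ra: "reach T (Sup i) (Sup a)" and rb: "reach T (Sup i) (Dem b)"
    using spanning_tree_reach i ab by auto
  have "even (gdist T (Sup i) (Sup a))" "odd (gdist T (Sup i) (Dem b))"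
    using gdist_parity[OF ra] gdist_parity[OF rb] by simp_all
  moreover have "gdist T (Sup i) (Dem b) = gdist T (Sup i) (Sup a) + 1 \<or>
      gdist T (Sup i) (Sup a) = gdist T (Sup i) (Dem b) + 1"
    using gdist_adj[OF ra] True g by simp
  ultimately have "odd_edge T i g \<longleftrightarrow> gdist T (Sup i) (Dem b) = gdist T (Sup i) (Sup a) + 1"
    unfolding odd_edge_def edge_num_def g using True g by (auto simp: max_def)
  also have "\<dots> \<longleftrightarrow> reach (T - {g}) (Sup i) (Sup (fst g))"
    using spanning_tree_side_level(1) True i g by simp
  finally show ?thesis using True by simp
qed (simp add: odd_edge_def)

lemma edge_sign_level:
  assumes ds: "ds < N2"
  shows "plus_edge T ds (a, b) \<longleftrightarrow> (a, b) \<in> T \<and> gdist T (Dem ds) (Sup a) = gdist T (Dem ds) (Dem b) + 1"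
    and "minus_edge T ds (a, b) \<longleftrightarrow> (a, b) \<in> T \<and> gdist T (Dem ds) (Dem b) = gdist T (Dem ds) (Sup a) + 1"
proof -
  let ?A = "gdist T (Dem ds) (Sup a)" and ?B = "gdist T (Dem ds) (Dem b)"
  have "(odd (edge_num T (Dem ds) (a, b)) \<longleftrightarrow> ?A = ?B + 1) \<and> (even (edge_num T (Dem ds) (a, b)) \<longleftrightarrow> ?B = ?A + 1)"
    if h: "(a, b) \<in> T"
  proof -
    have ra: "reach T (Dem ds) (Sup a)" and rb: "reach T (Dem ds) (Dem b)"
      using spanning_tree_reach ds spanning_tree_edge_range[OF h] by auto
    have "odd ?A" "even ?B" using gdist_parity[OF ra] gdist_parity[OF rb] by simp_all
    moreover have "?B = ?A + 1 \<or> ?A = ?B + 1" using gdist_adj[OF ra] h by simp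
    moreover have "edge_num T (Dem ds) (a, b) = max ?A ?B" unfolding edge_num_def by simp
    ultimately show ?thesis by (auto simp: max_def)
  qed
  then show "plus_edge T ds (a, b) \<longleftrightarrow> (a, b) \<in> T \<and> ?A = ?B + 1"
    and "minus_edge T ds (a, b) \<longleftrightarrow> (a, b) \<in> T \<and> ?B = ?A + 1"
    unfolding plus_edge_def minus_edge_def by blast+
qed

end

section \<open>The transportation polytope\<close>

lemma TP_nonneg: "y \<in> TP N1 N2 u v \<Longrightarrow> 0 \<le> y a b"
  and TP_row_sum: "y \<in> TP N1 N2 u v \<Longrightarrow> a < N1 \<Longrightarrow> (\<Sum>b<N2. y a b) = u a"
  and TP_column_sum: "y \<in> TP N1 N2 u v \<Longrightarrow> b < N2 \<Longrightarrow> (\<Sum>a<N1. y a b) = v b"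
  and TP_outside: "y \<in> TP N1 N2 u v \<Longrightarrow> \<not> (a < N1 \<and> b < N2) \<Longrightarrow> y a b = 0"
  by (simp_all add: TP_def)

lemma supp_TP_subset: "y \<in> TP N1 N2 u v \<Longrightarrow> supp y \<subseteq> {..<N1} \<times> {..<N2}"
  unfolding supp_def using TP_outside by fastforce

lemma TP_add_circulation:
  assumes y: "y \<in> TP N1 N2 u v"
    and rows: "\<forall>a<N1. (\<Sum>b<N2. d a b) = 0" and cols: "\<forall>b<N2. (\<Sum>a<N1. d a b) = 0"
    and out: "\<And>a b. \<not> (a < N1 \<and> b < N2) \<Longrightarrow> d a b = 0"
    and nonneg: "\<And>a b. 0 \<le> y a b + s * d a b"
  shows "(\<lambda>a b. y a b + s * d a b) \<in> TP N1 N2 u v"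
proof -
  have "(\<Sum>b<N2. y a b + s * d a b) = u a" if "a < N1" for a
    using that rows TP_row_sum[OF y that] by (simp add: sum.distrib sum_distrib_left[symmetric])
  moreover have "(\<Sum>a<N1. y a b + s * d a b) = v b" if "b < N2" for b
    using that cols TP_column_sum[OF y that] by (simp add: sum.distrib sum_distrib_left[symmetric])
  ultimately show ?thesis unfolding TP_def using TP_outside[OF y] out nonneg by auto
qed

definition flow_in :: "nat \<Rightarrow> (nat \<Rightarrow> nat \<Rightarrow> real) \<Rightarrow> nat set \<Rightarrow> nat set \<Rightarrow> real" where
  "flow_in N1 z I J = (\<Sum>b\<in>J. \<Sum>a\<in>{..<N1} - I. z a b)"

definition flow_out :: "nat \<Rightarrow> (nat \<Rightarrow> nat \<Rightarrow> real) \<Rightarrow> nat set \<Rightarrow> nat set \<Rightarrow> real" where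
  "flow_out N2 z I J = (\<Sum>a\<in>I. \<Sum>b\<in>{..<N2} - J. z a b)"

lemma flow_in_minus_flow_out:
  assumes I: "I \<subseteq> {..<N1}" and J: "J \<subseteq> {..<N2}"
  shows "flow_in N1 z I J - flow_out N2 z I J =
    (\<Sum>b\<in>J. \<Sum>a<N1. z a b) - (\<Sum>a\<in>I. \<Sum>b<N2. z a b)"
proof -
  have "(\<Sum>a<N1. z a b) = (\<Sum>a\<in>{..<N1} - I. z a b) + (\<Sum>a\<in>I. z a b)" for b
    using sum.subset_diff[OF I] by simp
  then have "(\<Sum>b\<in>J. \<Sum>a<N1. z a b) = flow_in N1 z I J + (\<Sum>b\<in>J. \<Sum>a\<in>I. z a b)"
    by (simp add: flow_in_def sum.distrib)
  moreover have "(\<Sum>b<N2. z a b) = (\<Sum>b\<in>{..<N2} - J. z a b) + (\<Sum>b\<in>J. z a b)" for a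
    using sum.subset_diff[OF J] by simp
  then have "(\<Sum>a\<in>I. \<Sum>b<N2. z a b) = flow_out N2 z I J + (\<Sum>a\<in>I. \<Sum>b\<in>J. z a b)"
    by (simp add: flow_out_def sum.distrib)
  moreover have "(\<Sum>b\<in>J. \<Sum>a\<in>I. z a b) = (\<Sum>a\<in>I. \<Sum>b\<in>J. z a b)" by (rule sum.swap)
  ultimately show ?thesis by simp
qed

lemma TP_flow_balance:
  assumes y: "y \<in> TP N1 N2 u v" and I: "I \<subseteq> {..<N1}" and J: "J \<subseteq> {..<N2}"
  shows "flow_in N1 y I J - flow_out N2 y I J = sum v J - sum u I"
proof -
  have "(\<Sum>b\<in>J. \<Sum>a<N1. y a b) = sum v J"
    by (rule sum.cong[OF refl]) (use TP_column_sum[OF y] J in auto)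
  moreover have "(\<Sum>a\<in>I. \<Sum>b<N2. y a b) = sum u I"
    by (rule sum.cong[OF refl]) (use TP_row_sum[OF y] I in auto)
  ultimately show ?thesis using flow_in_minus_flow_out[OF I J] by simp
qed

lemma circulation_flow_balance:
  assumes rows: "\<forall>a<N1. (\<Sum>b<N2. d a b) = 0" and cols: "\<forall>b<N2. (\<Sum>a<N1. d a b) = 0"
    and I: "I \<subseteq> {..<N1}" and J: "J \<subseteq> {..<N2}"
  shows "flow_in N1 d I J = flow_out N2 d I J"
proof -
  have "(\<Sum>b\<in>J. \<Sum>a<N1. d a b) = 0" using cols J by (intro sum.neutral) auto
  moreover have "(\<Sum>a\<in>I. \<Sum>b<N2. d a b) = 0" using rows I by (intro sum.neutral) auto
  ultimately show ?thesis using flow_in_minus_flow_out[OF I J, of d] by simp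
qed

lemma double_sum_sparse:
  fixes z :: "nat \<Rightarrow> nat \<Rightarrow> real"
  assumes "finite A" "finite B" "finite P"
    and "\<And>a b. a \<in> A \<Longrightarrow> b \<in> B \<Longrightarrow> z a b \<noteq> 0 \<Longrightarrow> (a, b) \<in> P"
  shows "(\<Sum>a\<in>A. \<Sum>b\<in>B. z a b) = (\<Sum>g\<in>P \<inter> (A \<times> B). z (fst g) (snd g))"
proof -
  have "(\<Sum>a\<in>A. \<Sum>b\<in>B. z a b) = (\<Sum>g\<in>A \<times> B. z (fst g) (snd g))"
    by (simp add: sum.cartesian_product case_prod_beta)
  also have "\<dots> = (\<Sum>g\<in>P \<inter> (A \<times> B). z (fst g) (snd g))"
    by (rule sum.mono_neutral_right) (use assms in auto)
  finally show ?thesis .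
qed

lemma flow_in_sparse:
  assumes "J \<subseteq> {..<N2}" "finite P"
    and "\<And>a b. a < N1 \<Longrightarrow> a \<notin> I \<Longrightarrow> b \<in> J \<Longrightarrow> z a b \<noteq> 0 \<Longrightarrow> (a, b) \<in> P"
  shows "flow_in N1 z I J = (\<Sum>g\<in>P \<inter> (({..<N1} - I) \<times> J). z (fst g) (snd g))"
  unfolding flow_in_def using assms
  by (subst sum.swap, intro double_sum_sparse) (auto intro: finite_subset)

lemma flow_out_sparse:
  assumes "I \<subseteq> {..<N1}" "finite P"
    and "\<And>a b. a \<in> I \<Longrightarrow> b < N2 \<Longrightarrow> b \<notin> J \<Longrightarrow> z a b \<noteq> 0 \<Longrightarrow> (a, b) \<in> P"
  shows "flow_out N2 z I J = (\<Sum>g\<in>P \<inter> (I \<times> ({..<N2} - J)). z (fst g) (snd g))"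
  unfolding flow_out_def using assms
  by (intro double_sum_sparse) (auto intro: finite_subset)

lemma entry_le_double_sum:
  fixes z :: "nat \<Rightarrow> nat \<Rightarrow> real"
  assumes "finite A" "finite B" "a \<in> A" "b \<in> B" "\<And>a b. a \<in> A \<Longrightarrow> b \<in> B \<Longrightarrow> 0 \<le> z a b"
  shows "z a b \<le> (\<Sum>a\<in>A. \<Sum>b\<in>B. z a b)"
proof -
  have "z a b \<le> (\<Sum>b\<in>B. z a b)" using assms by (intro member_le_sum) auto
  also have "\<dots> \<le> (\<Sum>a\<in>A. \<Sum>b\<in>B. z a b)"
    using assms by (intro member_le_sum[where f = "\<lambda>a. \<Sum>b\<in>B. z a b"]) (auto intro: sum_nonneg)
  finally show ?thesis .
qed

lemma entry_le_flow_in: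
  assumes "J \<subseteq> {..<N2}" "a < N1" "a \<notin> I" "b \<in> J" "\<And>a b. 0 \<le> z a b"
  shows "z a b \<le> flow_in N1 z I J"
  unfolding flow_in_def using assms
  by (subst sum.swap, intro entry_le_double_sum) (auto intro: finite_subset)

lemma entry_le_flow_out:
  assumes "I \<subseteq> {..<N1}" "a \<in> I" "b < N2" "b \<notin> J" "\<And>a b. 0 \<le> z a b"
  shows "z a b \<le> flow_out N2 z I J"
  unfolding flow_out_def using assms
  by (intro entry_le_double_sum) (auto intro: finite_subset)

definition incidence :: "nat \<times> nat \<Rightarrow> node \<Rightarrow> real" where
  "incidence g = (\<lambda>z. (if z = Sup (fst g) then 1 else 0) + (if z = Dem (snd g) then 1 else 0))"

definition scale_fun :: "real \<Rightarrow> (node \<Rightarrow> real) \<Rightarrow> node \<Rightarrow> real" where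
  "scale_fun c f = (\<lambda>z. c * f z)"

interpretation node_fun: vector_space scale_fun
  by unfold_locales (auto simp: scale_fun_def algebra_simps plus_fun_def)

lemma inj_incidence: "inj incidence"
proof
  fix g h assume e: "incidence g = incidence h"
  have "incidence g (Sup (fst g)) = incidence h (Sup (fst g))"
    "incidence g (Dem (snd g)) = incidence h (Dem (snd g))"
    using e by auto
  then show "g = h" unfolding incidence_def by (cases g, cases h) (auto split: if_splits)
qed

lemma sum_fun_apply: "finite A \<Longrightarrow> (\<Sum>x\<in>A. f x) z = (\<Sum>x\<in>A. f x z)"
  for f :: "'a \<Rightarrow> node \<Rightarrow> real"
  by (induction A rule: finite_induct) (auto simp: plus_fun_def)

text \<open>The incidence vectors of the grid lie in the span of the \<open>N1 + N2 - 1\<close> edges at supply node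
  \<open>0\<close> and at demand node \<open>0\<close>.\<close>
lemma incidence_dependent:
  assumes E: "E \<subseteq> {..<N1} \<times> {..<N2}" and big: "card E > N1 + N2 - 1"
  shows "node_fun.dependent (incidence ` E)"
proof -
  have "E \<noteq> {}" using big by (metis card.empty not_less0)
  then obtain a0 b0 where "(a0, b0) \<in> E" by auto
  then have N: "0 < N1" "0 < N2" using E by auto
  define K where "K = ({..<N1} \<times> {0}) \<union> ({0} \<times> {1..<N2})"
  define B where "B = incidence ` K"
  have fB: "finite B" unfolding B_def K_def by simp
  have "card K \<le> card ({..<N1} \<times> {0::nat}) + card ({0::nat} \<times> {1..<N2})"
    unfolding K_def by (rule card_Un_le)
  then have card_B: "card B \<le> N1 + N2 - 1"
    unfolding B_def using card_image_le[of K incidence] N by (simp add: card_cartesian_product K_def)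
  have incidence_split: "incidence (a, b) = incidence (a, 0) + incidence (0, b) - incidence (0, 0)" for a b
    by (rule ext) (auto simp: incidence_def)
  have "incidence ` E \<subseteq> node_fun.span B"
  proof
    fix x assume "x \<in> incidence ` E"
    then obtain a b where ab: "(a, b) \<in> E" "x = incidence (a, b)" by auto
    have "a < N1" "b < N2" using ab E by auto
    then have "incidence (a, 0) \<in> node_fun.span B" "incidence (0, b) \<in> node_fun.span B"
      "incidence (0, 0) \<in> node_fun.span B"
      using N by (auto intro!: node_fun.span_base simp: B_def K_def)
    then show "x \<in> node_fun.span B"
      using ab incidence_split node_fun.span_add node_fun.span_diff by metis
  qed
  moreover have "card (incidence ` E) = card E"
    using inj_incidence by (simp add: card_image inj_on_subset)
  ultimately show ?thesis
    using node_fun.independent_span_bound[OF fB] big card_B by fastforce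
qed

lemma incidence_combination_margins:
  assumes zero: "(\<Sum>g\<in>{..<N1} \<times> {..<N2}. scale_fun (d (fst g) (snd g)) (incidence g)) = 0"
  shows "\<forall>a<N1. (\<Sum>b<N2. d a b) = 0" and "\<forall>b<N2. (\<Sum>a<N1. d a b) = 0"
proof -
  have at_node: "(\<Sum>a<N1. \<Sum>b<N2. d a b * incidence (a, b) z) = 0" for z
  proof -
    have "(\<Sum>g\<in>{..<N1} \<times> {..<N2}. scale_fun (d (fst g) (snd g)) (incidence g)) z = 0"
      using zero by (simp add: zero_fun_def)
    then show ?thesis
      by (simp add: sum_fun_apply scale_fun_def sum.cartesian_product case_prod_beta)
  qed
  show "\<forall>a<N1. (\<Sum>b<N2. d a b) = 0"
  proof (intro allI impI)
    fix x assume x: "x < N1"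
    have "0 = (\<Sum>a<N1. \<Sum>b<N2. d a b * incidence (a, b) (Sup x))" using at_node by simp
    also have "\<dots> = (\<Sum>a<N1. if a = x then (\<Sum>b<N2. d a b) else 0)"
      by (intro sum.cong) (auto simp: incidence_def)
    finally show "(\<Sum>b<N2. d x b) = 0" using x by simp
  qed
  show "\<forall>b<N2. (\<Sum>a<N1. d a b) = 0"
  proof (intro allI impI)
    fix x assume x: "x < N2"
    have "0 = (\<Sum>a<N1. \<Sum>b<N2. d a b * incidence (a, b) (Dem x))" using at_node by simp
    also have "\<dots> = (\<Sum>a<N1. \<Sum>b<N2. if b = x then d a b else 0)"
      by (intro sum.cong) (auto simp: incidence_def)
    finally show "(\<Sum>a<N1. d a x) = 0" using x by simp
  qed
qed

text \<open>The coefficients of a linear dependence of the incidence vectors form a circulation.\<close>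
lemma circulation_exists:
  assumes E: "E \<subseteq> {..<N1} \<times> {..<N2}" and big: "card E > N1 + N2 - 1"
  obtains d :: "nat \<Rightarrow> nat \<Rightarrow> real"
  where "\<And>a b. d a b \<noteq> 0 \<Longrightarrow> (a, b) \<in> E" "\<exists>a b. d a b \<noteq> 0"
    "\<forall>a<N1. (\<Sum>b<N2. d a b) = 0" "\<forall>b<N2. (\<Sum>a<N1. d a b) = 0"
proof -
  obtain T U where T: "finite T" "T \<subseteq> incidence ` E" "(\<Sum>v\<in>T. scale_fun (U v) v) = 0"
    "\<exists>v\<in>T. U v \<noteq> 0"
    using incidence_dependent[OF E big] unfolding node_fun.dependent_explicit by blast
  define ET where "ET = {g \<in> E. incidence g \<in> T}"
  have T_ET: "T = incidence ` ET" using T(2) unfolding ET_def by auto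
  define d where "d a b = (if (a, b) \<in> ET then U (incidence (a, b)) else 0)" for a b
  have "(\<Sum>v\<in>T. scale_fun (U v) v) = (\<Sum>g\<in>ET. scale_fun (U (incidence g)) (incidence g))"
    unfolding T_ET by (rule sum.reindex_cong[OF inj_on_subset[OF inj_incidence]]) auto
  also have "\<dots> = (\<Sum>g\<in>{..<N1} \<times> {..<N2}. scale_fun (d (fst g) (snd g)) (incidence g))"
    by (rule sum.mono_neutral_cong_left)
      (use E in \<open>auto simp: d_def scale_fun_def zero_fun_def ET_def\<close>)
  finally have margins: "\<forall>a<N1. (\<Sum>b<N2. d a b) = 0" "\<forall>b<N2. (\<Sum>a<N1. d a b) = 0"
    using incidence_combination_margins T(3) by auto
  moreover have "\<exists>a b. d a b \<noteq> 0"
  proof -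
    obtain v where v: "v \<in> T" "U v \<noteq> 0" using T(4) by blast
    then obtain g where "g \<in> ET" "v = incidence g" using T_ET by auto
    then show ?thesis using v by (intro exI[of _ "fst g"] exI[of _ "snd g"]) (auto simp: d_def)
  qed
  moreover have "\<And>a b. d a b \<noteq> 0 \<Longrightarrow> (a, b) \<in> E" unfolding d_def ET_def by (auto split: if_splits)
  ultimately show thesis using that by blast
qed

text \<open>A support with more edges carries a nonzero circulation \<open>d\<close>; then \<open>y \<pm> \<epsilon> d\<close> are feasible
  for small \<open>\<epsilon>\<close> and have midpoint \<open>y\<close>.\<close>
lemma vertex_supp_card_le:
  assumes vx: "is_vertex N1 N2 u v y"
  shows "card (supp y) \<le> N1 + N2 - 1"
proof (rule ccontr)
  assume big: "\<not> card (supp y) \<le> N1 + N2 - 1"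
  have y: "y \<in> TP N1 N2 u v" using vx is_vertex_def by blast
  obtain d :: "nat \<Rightarrow> nat \<Rightarrow> real" where sp: "\<And>a b. d a b \<noteq> 0 \<Longrightarrow> (a, b) \<in> supp y"
    and nz: "\<exists>a b. d a b \<noteq> 0" and rows: "\<forall>a<N1. (\<Sum>b<N2. d a b) = 0"
    and cols: "\<forall>b<N2. (\<Sum>a<N1. d a b) = 0"
    using circulation_exists[OF supp_TP_subset[OF y]] big by (metis not_le)
  define D where "D = {g \<in> supp y. d (fst g) (snd g) \<noteq> 0}"
  have "finite (supp y)" using supp_TP_subset[OF y] by (rule finite_subset) simp
  then have fD: "finite D" unfolding D_def by simp
  have neD: "D \<noteq> {}" using nz sp unfolding D_def by fastforce
  define eps where "eps = Min ((\<lambda>g. y (fst g) (snd g) / \<bar>d (fst g) (snd g)\<bar>) ` D)"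
  have epos: "eps > 0" unfolding eps_def
    using fD neD TP_nonneg[OF y] by (subst Min_gr_iff) (auto intro!: divide_pos_pos simp: less_le D_def supp_def)
  have bound: "eps * \<bar>d a b\<bar> \<le> y a b" for a b
  proof (cases "d a b = 0")
    case True then show ?thesis using TP_nonneg[OF y] by simp
  next
    case False
    then have "(a, b) \<in> D" using sp unfolding D_def by auto
    then have "eps \<le> y a b / \<bar>d a b\<bar>"
      unfolding eps_def using fD by (intro Min_le) (auto simp: image_iff intro!: bexI[of _ "(a, b)"])
    then show ?thesis using False by (simp add: le_divide_eq)
  qed
  have out: "\<not> (a < N1 \<and> b < N2) \<Longrightarrow> d a b = 0" for a b
    using sp supp_TP_subset[OF y] by blast
  have "0 \<le> y a b + eps * d a b" "0 \<le> y a b + (- eps) * d a b" for a b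
    using bound[of a b] abs_le_iff[of "d a b"] epos
    by (smt (verit, best) mult_left_mono mult_minus_right mult_minus_left)+
  moreover define p where "p = (\<lambda>a b. y a b + eps * d a b)"
  moreover define q where "q = (\<lambda>a b. y a b + (- eps) * d a b)"
  ultimately have "p \<in> TP N1 N2 u v" "q \<in> TP N1 N2 u v"
    using TP_add_circulation[OF y rows cols out] by blast+
  moreover have "\<forall>a b. y a b = (p a b + q a b) / 2" unfolding p_def q_def by simp
  ultimately have "p = q" using vx unfolding is_vertex_def by blast
  then have "eps * d a b = 0" for a b
    using fun_cong[OF fun_cong[OF \<open>p = q\<close>, of a], of b] unfolding p_def q_def by simp
  then show False using nz epos by simp
qed

locale nondegenerate_TP =
  fixes N1 N2 :: nat and u v :: "nat \<Rightarrow> real"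
  assumes N1: "N1 \<ge> 1" and N2: "N2 \<ge> 1"
    and u_pos: "\<forall>a<N1. u a > 0" and v_pos: "\<forall>b<N2. v b > 0"
    and balanced: "(\<Sum>a<N1. u a) = (\<Sum>b<N2. v b)"
    and nondeg: "non_degenerate N1 N2 u v"
begin

lemma sum_u_pos: "I \<subseteq> {..<N1} \<Longrightarrow> I \<noteq> {} \<Longrightarrow> sum u I > 0"
  using u_pos by (intro sum_pos) (auto intro: finite_subset[of _ "{..<N1}"])

lemma sum_v_pos: "J \<subseteq> {..<N2} \<Longrightarrow> J \<noteq> {} \<Longrightarrow> sum v J > 0"
  using v_pos by (intro sum_pos) (auto intro: finite_subset[of _ "{..<N2}"])

lemma equal_margin_sums_full:
  assumes I: "I \<subseteq> {..<N1}" and J: "J \<subseteq> {..<N2}" and eq: "sum u I = sum v J"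
    and ne: "I \<noteq> {} \<or> J \<noteq> {}"
  shows "I = {..<N1} \<and> J = {..<N2}"
proof -
  have "I \<noteq> {}" "J \<noteq> {}" using sum_v_pos[OF J] sum_u_pos[OF I] eq ne by force+
  then have "I = {..<N1} \<or> J = {..<N2}"
    using nondeg I J eq unfolding non_degenerate_def by (metis psubsetI)
  moreover have "I = {..<N1} \<longleftrightarrow> J = {..<N2}"
  proof -
    have "sum v {..<N2} = sum v J + sum v ({..<N2} - J)" "sum u {..<N1} = sum u I + sum u ({..<N1} - I)"
      using sum.subset_diff[OF J] sum.subset_diff[OF I] by (simp_all add: add.commute)
    moreover have "J \<noteq> {..<N2} \<Longrightarrow> sum v ({..<N2} - J) > 0" "I \<noteq> {..<N1} \<Longrightarrow> sum u ({..<N1} - I) > 0"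
      using sum_v_pos sum_u_pos I J by auto
    ultimately show ?thesis using eq balanced by force
  qed
  ultimately show ?thesis by blast
qed

text \<open>A set of supply and demand indices closed under the edges of two feasible points has
  balanced margins, so by non-degeneracy it is everything.\<close>
lemma closed_index_sets_full:
  assumes y1: "y1 \<in> TP N1 N2 u v" and y2: "y2 \<in> TP N1 N2 u v"
    and I: "I \<subseteq> {..<N1}" and J: "J \<subseteq> {..<N2}"
    and closed1: "\<And>a b. a \<in> I \<Longrightarrow> b < N2 \<Longrightarrow> y1 a b \<noteq> 0 \<Longrightarrow> b \<in> J"
    and closed2: "\<And>a b. b \<in> J \<Longrightarrow> a < N1 \<Longrightarrow> y2 a b \<noteq> 0 \<Longrightarrow> a \<in> I"
    and ne: "I \<noteq> {} \<or> J \<noteq> {}"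
  shows "I = {..<N1} \<and> J = {..<N2}"
proof -
  have "flow_out N2 y1 I J = 0" "flow_in N1 y2 I J = 0"
    unfolding flow_out_def flow_in_def using closed1 closed2 I J
    by (auto intro!: sum.neutral)
  moreover have "0 \<le> flow_in N1 y1 I J" "0 \<le> flow_out N2 y2 I J"
    unfolding flow_out_def flow_in_def using TP_nonneg[OF y1] TP_nonneg[OF y2]
    by (auto intro!: sum_nonneg)
  ultimately have "sum u I = sum v J"
    using TP_flow_balance[OF y1 I J] TP_flow_balance[OF y2 I J] by linarith
  then show ?thesis using equal_margin_sums_full[OF I J _ ne] by simp
qed

lemma supp_connected:
  assumes y: "y \<in> TP N1 N2 u v" and x: "x \<in> nodes N1 N2" and z: "z \<in> nodes N1 N2"
  shows "reach (supp y) x z"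
proof -
  define I where "I = {a. a < N1 \<and> reach (supp y) (Sup 0) (Sup a)}"
  define J where "J = {b. b < N2 \<and> reach (supp y) (Sup 0) (Dem b)}"
  have "I = {..<N1} \<and> J = {..<N2}"
  proof (rule closed_index_sets_full[OF y y])
    show "I \<subseteq> {..<N1}" "J \<subseteq> {..<N2}" unfolding I_def J_def by auto
    have "0 \<in> I" using N1 unfolding I_def by simp
    then show "I \<noteq> {} \<or> J \<noteq> {}" by blast
  qed (auto simp: I_def J_def supp_def intro: reach_step)
  then have "\<forall>z\<in>nodes N1 N2. reach (supp y) (Sup 0) z"
    unfolding I_def J_def nodes_def by auto
  then show ?thesis using x z reach_sym rtranclp_trans by metis
qed

lemma vertex_tree_spanning_tree:
  assumes "vertex_tree N1 N2 u v C"
  shows "spanning_tree N1 N2 C"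
proof -
  obtain y where vx: "is_vertex N1 N2 u v y" and C: "supp y = C"
    using assms unfolding vertex_tree_def by blast
  have y: "y \<in> TP N1 N2 u v" using vx is_vertex_def by blast
  have "N1 + N2 - 1 \<le> card (supp y)"
    using connected_card_edges_ge[OF supp_TP_subset[OF y], of "Sup 0"] supp_connected[OF y] N1 by auto
  then show ?thesis
    unfolding spanning_tree_def using supp_TP_subset[OF y] supp_connected[OF y]
      vertex_supp_card_le[OF vx] C by auto
qed

end

locale pivot_data = nondegenerate_TP +
  fixes C C' :: "(nat \<times> nat) set" and e :: "nat \<times> nat"
    and y d :: "nat \<Rightarrow> nat \<Rightarrow> real" and t :: real
  assumes vertex_y: "is_vertex N1 N2 u v y" and supp_y: "supp y = C"
    and e_notin_C: "e \<notin> C" and e_range: "fst e < N1" "snd e < N2"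
    and supp_d: "supp d \<subseteq> insert e C" and d_e: "d (fst e) (snd e) = 1"
    and d_values: "\<forall>a b. d a b \<in> {-1, 0, 1}"
    and d_rows: "\<forall>a<N1. (\<Sum>b<N2. d a b) = 0" and d_cols: "\<forall>b<N2. (\<Sum>a<N1. d a b) = 0"
    and t_nonneg: "0 \<le> t" and feasible: "\<forall>a b. 0 \<le> y a b + t * d a b"
    and t_maximal: "\<forall>s>t. \<not> (\<forall>a b. 0 \<le> y a b + s * d a b)"
    and C'_def: "C' = supp (\<lambda>a b. y a b + t * d a b)"
begin

lemma y_TP: "y \<in> TP N1 N2 u v"
  using vertex_y is_vertex_def by blast

lemma C_spanning_tree: "spanning_tree N1 N2 C"
  using vertex_tree_spanning_tree vertex_y supp_y unfolding vertex_tree_def by blast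

lemma y_pos: "(a, b) \<in> C \<Longrightarrow> 0 < y a b"
  using supp_y TP_nonneg[OF y_TP, of a b] unfolding supp_def by auto

lemma y_zero: "(a, b) \<notin> C \<Longrightarrow> y a b = 0"
  using supp_y unfolding supp_def by auto

lemma d_nonzero: "d a b \<noteq> 0 \<Longrightarrow> (a, b) \<in> insert e C"
  using supp_d unfolding supp_def by auto

lemma feasible_if_bounded_on_C:
  assumes "0 \<le> s" and "\<And>a b. (a, b) \<in> C \<Longrightarrow> 0 \<le> y a b + s * d a b"
  shows "\<forall>a b. 0 \<le> y a b + s * d a b"
proof (intro allI)
  fix a b
  show "0 \<le> y a b + s * d a b"
  proof (cases "(a, b) \<in> C")
    case False
    then have "d a b = 0 \<or> ((a, b) = e \<and> d a b = 1)" using d_nonzero d_e by (cases e) auto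
    then show ?thesis using False y_zero assms(1) by auto
  qed (use assms(2) in blast)
qed

lemma C_lower_bound:
  fixes w :: "nat \<Rightarrow> nat \<Rightarrow> real"
  assumes "\<And>a b. (a, b) \<in> C \<Longrightarrow> 0 < w a b"
  obtains m where "0 < m" "\<And>a b. (a, b) \<in> C \<Longrightarrow> m \<le> w a b"
proof -
  have fin: "finite C" and ne: "C \<noteq> {}"
    using spanning_tree_finite[OF C_spanning_tree] C_spanning_tree N1 N2
    unfolding spanning_tree_def by auto
  define m where "m = Min ((\<lambda>g. w (fst g) (snd g)) ` C)"
  have "0 < m" unfolding m_def using fin ne assms by (subst Min_gr_iff) auto
  moreover have "m \<le> w a b" if "(a, b) \<in> C" for a b
    unfolding m_def using fin that by (intro Min_le) (auto simp: image_iff intro!: bexI[of _ "(a, b)"])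
  ultimately show thesis using that by blast
qed

lemma d_ge: "- 1 \<le> d a b"
  using d_values[rule_format, of a b] by auto

lemma step_pos: "0 < t"
proof (rule ccontr)
  assume "\<not> 0 < t"
  obtain m where m: "0 < m" "\<And>a b. (a, b) \<in> C \<Longrightarrow> m \<le> y a b"
    using C_lower_bound y_pos by blast
  have "0 \<le> y a b + m * d a b" if "(a, b) \<in> C" for a b
  proof -
    have "- m \<le> m * d a b" using mult_left_mono[OF d_ge[of a b], of m] m(1) by simp
    then show ?thesis using m(2)[OF that] by linarith
  qed
  then have "\<forall>a b. 0 \<le> y a b + m * d a b" using feasible_if_bounded_on_C m(1) by simp
  moreover have "t < m" using m(1) \<open>\<not> 0 < t\<close> t_nonneg by simp
  ultimately show False using t_maximal by blast
qed

lemma pivoted_TP: "(\<lambda>a b. y a b + t * d a b) \<in> TP N1 N2 u v"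
proof (rule TP_add_circulation[OF y_TP d_rows d_cols])
  fix a b assume "\<not> (a < N1 \<and> b < N2)"
  then have "(a, b) \<notin> insert e C"
    using spanning_tree_edge_range[OF C_spanning_tree] e_range by (cases e) auto
  then show "d a b = 0" using d_nonzero by blast
qed (use feasible in blast)

lemma C'_subset: "C' \<subseteq> insert e C"
  unfolding C'_def supp_def using d_nonzero y_zero by fastforce

lemma e_in_C': "e \<in> C'"
  using y_zero[of "fst e" "snd e"] e_notin_C d_e step_pos unfolding C'_def supp_def by auto

lemma pivot_deletes_edge: "C - C' \<noteq> {}"
proof
  assume "C - C' = {}"
  then have pos: "0 < y a b + t * d a b" if "(a, b) \<in> C" for a b
    using that feasible C'_def unfolding supp_def by (metis (mono_tags, lifting) Diff_iff
        case_prod_conv empty_iff less_eq_real_def mem_Collect_eq)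
  obtain m where m: "0 < m" "\<And>a b. (a, b) \<in> C \<Longrightarrow> m \<le> y a b + t * d a b"
    using C_lower_bound[of "\<lambda>a b. y a b + t * d a b"] pos by blast
  have "0 \<le> y a b + (t + m) * d a b" if "(a, b) \<in> C" for a b
  proof -
    have "- m \<le> m * d a b" using mult_left_mono[OF d_ge[of a b], of m] m(1) by simp
    then show ?thesis using m(2)[OF that] by (simp add: algebra_simps)
  qed
  then have "\<forall>a b. 0 \<le> y a b + (t + m) * d a b"
    using feasible_if_bounded_on_C step_pos m(1) by simp
  moreover have "t < t + m" using m(1) by simp
  ultimately show False using t_maximal by blast
qed

text \<open>\<open>C'\<close> has at least \<open>N1 + N2 - 1\<close> edges and at most \<open>card C + 1 - card (C - C')\<close>.\<close>
lemma pivot_deletes_one_edge: "\<exists>f. C - C' = {f}"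
proof -
  have fC: "finite C" using spanning_tree_finite[OF C_spanning_tree] .
  have "C' \<subseteq> insert e (C - (C - C'))" using C'_subset by blast
  then have "card C' \<le> card (insert e (C - (C - C')))" using fC by (intro card_mono) auto
  also have "\<dots> = Suc (card (C - (C - C')))" using e_notin_C fC by simp
  also have "\<dots> = Suc (card C - card (C - C'))" using fC by (subst card_Diff_subset) auto
  finally have "card C' \<le> Suc (card C - card (C - C'))" .
  moreover have "N1 + N2 - 1 \<le> card C'"
    using connected_card_edges_ge[OF supp_TP_subset[OF pivoted_TP], of "Sup 0"]
      supp_connected[OF pivoted_TP] N1 C'_def by auto
  moreover have "card C = N1 + N2 - 1" using C_spanning_tree spanning_tree_def by simp
  moreover have "card (C - C') \<ge> 1" using pivot_deletes_edge fC by (simp add: Suc_leI card_gt_0_iff)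
  moreover have "card (C - C') \<le> card C" using fC by (simp add: card_mono)
  ultimately have "card (C - C') = 1" by linarith
  then show ?thesis using card_1_singletonE by blast
qed

lemma deleted_edge_direction: "(a, b) \<in> C - C' \<Longrightarrow> d a b = -1"
proof -
  assume ab: "(a, b) \<in> C - C'"
  then have "0 < y a b" "y a b + t * d a b = 0" using y_pos C'_def unfolding supp_def by auto
  then have "d a b < 0" using step_pos by (smt (verit) mult_nonneg_nonneg)
  then show ?thesis using d_values[rule_format, of a b] by auto
qed

lemma step_le_decreasing_entry: "d a b = -1 \<Longrightarrow> t \<le> y a b"
  using feasible[rule_format, of a b] by simp

context
  fixes f assumes deleted: "C - C' = {f}"
begin

lemma C'_eq: "C' = insert e (C - {f})"
  using C'_subset e_in_C' deleted by auto

lemma C'_spanning_tree: "spanning_tree N1 N2 C'"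
proof -
  have fC: "finite C" using spanning_tree_finite[OF C_spanning_tree] .
  have "f \<in> C" using deleted by auto
  then have "card C > 0" using fC card_gt_0_iff by blast
  then have "card C' = card C" unfolding C'_eq using e_notin_C \<open>f \<in> C\<close> fC by simp
  then have "card C' = N1 + N2 - 1" using C_spanning_tree unfolding spanning_tree_def by simp
  moreover have "C' \<subseteq> {..<N1} \<times> {..<N2}" using supp_TP_subset[OF pivoted_TP] C'_def by simp
  moreover have "\<forall>x\<in>nodes N1 N2. \<forall>z\<in>nodes N1 N2. reach C' x z"
    using supp_connected[OF pivoted_TP] C'_def by simp
  ultimately show ?thesis unfolding spanning_tree_def by blast
qed

end

end

section \<open>Well-connected subtrees\<close>

lemma well_connected_Sup:
  "well_connected F C S (Sup a) \<longleftrightarrow> (\<forall>b. (a, b) \<in> F \<longrightarrow> (a, b) \<in> C \<and> (a, b) \<in> S)"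
  and well_connected_Dem: "well_connected F C S (Dem b) \<longleftrightarrow> (\<forall>a. (a, b) \<in> C \<longrightarrow> (a, b) \<in> S)"
  by (simp_all add: well_connected_def)

inductive_set wc_subtree :: "(nat \<times> nat) set \<Rightarrow> nat \<Rightarrow> (nat \<times> nat) set \<Rightarrow> (nat \<times> nat) set \<Rightarrow> node \<Rightarrow> node set"
  for F ds C S r where
  root: "r \<in> wc_subtree F ds C S r"
| step: "z \<in> wc_subtree F ds C S r \<Longrightarrow> adj S z w \<Longrightarrow> gdist F (Dem ds) w = gdist F (Dem ds) z + 1
    \<Longrightarrow> well_connected F C S w \<Longrightarrow> w \<in> wc_subtree F ds C S r"

lemma wc_subtree_well_connected:
  "x \<in> wc_subtree F ds C S r \<Longrightarrow> x \<noteq> r \<Longrightarrow> well_connected F C S x"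
  by (induction rule: wc_subtree.induct) auto

lemma wc_subtree_trans:
  "x \<in> wc_subtree F ds C S r' \<Longrightarrow> r' \<in> wc_subtree F ds C S r \<Longrightarrow> x \<in> wc_subtree F ds C S r"
  by (induction rule: wc_subtree.induct) (auto intro: wc_subtree.intros)

locale rooted_TP = nondegenerate_TP +
  fixes F :: "(nat \<times> nat) set" and ds :: nat
  assumes vertex_tree_F: "vertex_tree N1 N2 u v F" and ds: "ds < N2"
begin

abbreviation level :: "node \<Rightarrow> nat" where "level \<equiv> gdist F (Dem ds)"

lemma F_spanning_tree: "spanning_tree N1 N2 F"
  using vertex_tree_spanning_tree[OF vertex_tree_F] .

lemma F_point: obtains yF where "yF \<in> TP N1 N2 u v" "supp yF = F"
  using vertex_tree_F unfolding vertex_tree_def is_vertex_def by blast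

lemma root_node: "Dem ds \<in> nodes N1 N2"
  using ds by simp

lemma F_adj_level: "adj F x z \<Longrightarrow> level z = level x + 1 \<or> level x = level z + 1"
  using gdist_adj spanning_tree_reach[OF F_spanning_tree root_node]
    adj_nodes[OF spanning_tree_subset[OF F_spanning_tree]] by blast

lemma F_unique_parent:
  "adj F w1 x \<Longrightarrow> adj F w2 x \<Longrightarrow> level w1 + 1 = level x \<Longrightarrow> level w2 + 1 = level x \<Longrightarrow> w1 = w2"
  using spanning_tree_unique_parent[OF F_spanning_tree root_node] by blast

lemma plus_edge_level: "plus_edge F ds (a, b) \<longleftrightarrow> (a, b) \<in> F \<and> level (Sup a) = level (Dem b) + 1"
  and minus_edge_level: "minus_edge F ds (a, b) \<longleftrightarrow> (a, b) \<in> F \<and> level (Dem b) = level (Sup a) + 1"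
  using edge_sign_level[OF F_spanning_tree ds] by blast+

lemma plus_or_minus_edge: "(a, b) \<in> F \<Longrightarrow> plus_edge F ds (a, b) \<or> minus_edge F ds (a, b)"
  using F_adj_level[of "Sup a" "Dem b"] plus_edge_level minus_edge_level by auto

lemma plus_not_minus: "plus_edge F ds g \<Longrightarrow> \<not> minus_edge F ds g"
  using plus_edge_level minus_edge_level by (cases g) auto

lemma plus_edge_unique: "plus_edge F ds (a, b) \<Longrightarrow> plus_edge F ds (a, b') \<Longrightarrow> b = b'"
  using F_unique_parent[of "Dem b" "Sup a" "Dem b'"] plus_edge_level by auto

lemma minus_edge_unique: "minus_edge F ds (a, b) \<Longrightarrow> minus_edge F ds (a', b) \<Longrightarrow> a = a'"
  using F_unique_parent[of "Sup a" "Dem b" "Sup a'"] minus_edge_level by auto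

lemma plus_edge_exists: "a < N1 \<Longrightarrow> \<exists>b. plus_edge F ds (a, b)"
proof -
  assume "a < N1"
  then have "reach F (Dem ds) (Sup a)" using spanning_tree_reach[OF F_spanning_tree root_node] by simp
  then obtain w where "adj F w (Sup a)" "level w + 1 = level (Sup a)"
    using gdist_predecessor by blast
  then show ?thesis using plus_edge_level by (cases w) auto
qed

lemma minus_edge_exists: "b < N2 \<Longrightarrow> b \<noteq> ds \<Longrightarrow> \<exists>a. minus_edge F ds (a, b)"
proof -
  assume b: "b < N2" "b \<noteq> ds"
  then have "reach F (Dem ds) (Dem b)" using spanning_tree_reach[OF F_spanning_tree root_node] by simp
  then obtain w where "adj F w (Dem b)" "level w + 1 = level (Dem b)"
    using gdist_predecessor b by blast
  then show ?thesis using minus_edge_level by (cases w) auto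
qed

lemma minus_edge_not_root: "minus_edge F ds (a, b) \<Longrightarrow> b \<noteq> ds"
  using minus_edge_level by auto

lemma wc_subtree_level:
  "x \<in> wc_subtree F ds C S r \<Longrightarrow> level r \<le> level x \<and> (x \<noteq> r \<longrightarrow> level r < level x)"
  by (induction rule: wc_subtree.induct) auto

lemma wc_subtree_parent:
  assumes "S \<subseteq> F" and x: "x \<in> wc_subtree F ds C S r" "x \<noteq> r"
    and w: "adj F w x" "level w + 1 = level x"
  shows "w \<in> wc_subtree F ds C S r"
  using x
proof (cases rule: wc_subtree.cases)
  case (step z)
  have "adj F z x" using step(2) adj_mono assms(1) adj_sym by blast
  then have "z = w" using F_unique_parent w step(3) by simp
  then show ?thesis using step by simp
qed simp

definition plus_edges_wc :: "(nat \<times> nat) set \<Rightarrow> (nat \<times> nat) set \<Rightarrow> bool" where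
  "plus_edges_wc C S \<longleftrightarrow>
     (\<forall>a b. (a, b) \<in> S \<longrightarrow> plus_edge F ds (a, b) \<longrightarrow> well_connected F C S (Sup a))"

definition minus_edges_wc :: "(nat \<times> nat) set \<Rightarrow> (nat \<times> nat) set \<Rightarrow> bool" where
  "minus_edges_wc C S \<longleftrightarrow> (\<forall>a b. (a, b) \<in> S \<longrightarrow> minus_edge F ds (a, b) \<longrightarrow>
     well_connected F C S (Sup a) \<longrightarrow> well_connected F C S (Dem b))"

context
  fixes C S :: "(nat \<times> nat) set"
  assumes S: "S \<subseteq> C \<inter> F" and plus_wc: "plus_edges_wc C S" and minus_wc: "minus_edges_wc C S"
begin

lemma wc_subtree_descend_F:
  assumes x: "Sup a \<in> wc_subtree F ds C S r" "Sup a \<noteq> r" and ab: "(a, b) \<in> F"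
  shows "Dem b \<in> wc_subtree F ds C S r"
proof -
  have wa: "well_connected F C S (Sup a)" using wc_subtree_well_connected x by blast
  then have abS: "(a, b) \<in> S" using ab unfolding well_connected_Sup by blast
  consider "plus_edge F ds (a, b)" | "minus_edge F ds (a, b)" using plus_or_minus_edge ab by blast
  then show ?thesis
  proof cases
    case 1
    moreover have "S \<subseteq> F" using S by blast
    ultimately show ?thesis using wc_subtree_parent[OF _ x] ab plus_edge_level by simp
  next
    case 2
    then have "well_connected F C S (Dem b)"
      using minus_wc abS wa unfolding minus_edges_wc_def by blast
    then show ?thesis using wc_subtree.step[OF x(1)] abS 2 minus_edge_level by simp
  qed
qed

lemma wc_subtree_descend_C:
  assumes x: "Dem b \<in> wc_subtree F ds C S r" "well_connected F C S (Dem b)" and ab: "(a, b) \<in> C"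
    and not_parent: "minus_edge F ds (a, b) \<Longrightarrow> Dem b \<noteq> r"
  shows "Sup a \<in> wc_subtree F ds C S r"
proof -
  have abS: "(a, b) \<in> S" using x(2) ab unfolding well_connected_Dem by blast
  have SF: "S \<subseteq> F" using S by blast
  consider "plus_edge F ds (a, b)" | "minus_edge F ds (a, b)" using plus_or_minus_edge abS SF by blast
  then show ?thesis
  proof cases
    case 1
    then have "well_connected F C S (Sup a)" using plus_wc abS unfolding plus_edges_wc_def by blast
    then show ?thesis using wc_subtree.step[OF x(1)] abS 1 plus_edge_level by simp
  next
    case 2
    then show ?thesis using wc_subtree_parent[OF SF x(1) not_parent] abS SF minus_edge_level by auto
  qed
qed

lemma wc_edges_subset_F: "adj (wc_edges F C S) x z \<Longrightarrow> adj F x z"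
  using S unfolding wc_edges_def adj_def by blast

lemma wc_edge_away_from_root_wc:
  assumes "adj (wc_edges F C S) x z" and "level z = level x + 1"
  shows "well_connected F C S z"
proof -
  obtain a b where ab: "(a, b) \<in> wc_edges F C S" "(x = Sup a \<and> z = Dem b) \<or> (x = Dem b \<and> z = Sup a)"
    using assms(1) unfolding adj_def by blast
  have aS: "(a, b) \<in> S"
    and w: "well_connected F C S (Sup a) \<or> well_connected F C S (Dem b)"
    using ab(1) unfolding wc_edges_def by auto
  have "(a, b) \<in> F" using aS S by blast
  with ab(2) assms(2) consider "x = Sup a" "z = Dem b" "minus_edge F ds (a, b)"
    | "x = Dem b" "z = Sup a" "plus_edge F ds (a, b)"
    using minus_edge_level plus_edge_level by auto
  then show ?thesis
    by cases (use w minus_wc plus_wc aS minus_edges_wc_def plus_edges_wc_def in blast)+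
qed

text \<open>Along a simple walk in the well-connected graph that starts away from \<open>\<delta>\<^sup>*\<close>, the level keeps
  increasing, since every node has a single lower neighbour in \<open>F\<close>.\<close>
lemma wc_path_away_from_root_wc:
  "rtrancl_path (adj (wc_edges F C S)) x xs z \<Longrightarrow> distinct (x # xs) \<Longrightarrow> xs \<noteq> [] \<Longrightarrow>
    level (hd xs) = level x + 1 \<Longrightarrow> well_connected F C S z"
proof (induction x xs z rule: rtrancl_path.induct)
  case (step x w ws z)
  show ?case
  proof (cases ws)
    case Nil
    then have "w = z" using step(2) by (auto elim: rtrancl_path.cases)
    then show ?thesis using wc_edge_away_from_root_wc[OF step(1)] step by simp
  next
    case (Cons w' ws')
    have aw: "adj (wc_edges F C S) w w'" using step(2) Cons by (auto elim: rtrancl_path.cases)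
    have "level w' = level w + 1"
    proof (rule ccontr)
      assume "level w' \<noteq> level w + 1"
      then have "level w = level w' + 1" using F_adj_level[OF wc_edges_subset_F[OF aw]] by auto
      moreover have "level w = level x + 1" using step by simp
      ultimately have "w' = x"
        using F_unique_parent[of w' w x] wc_edges_subset_F[OF aw] wc_edges_subset_F[OF step(1)]
          adj_sym by auto
      then show False using step(4) Cons by auto
    qed
    then show ?thesis using step Cons by auto
  qed
qed simp

text \<open>Two open nodes in one well-connected component would be joined by a simple walk which leaves
  the first one away from \<open>\<delta>\<^sup>*\<close>, as the lower neighbour of an open node is not joined to it by a
  well-connected edge; the walk then makes the second one well-connected.\<close>
lemma wc_component_open_node_unique:
  assumes r1: "reach (wc_edges F C S) x z1" and o1: "open_node N1 N2 F C S z1"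
    and r2: "reach (wc_edges F C S) x z2" and o2: "open_node N1 N2 F C S z2"
  shows "z1 = z2"
proof (rule ccontr)
  let ?W = "wc_edges F C S"
  assume ne: "z1 \<noteq> z2"
  have "reach ?W z1 z2" using r1 r2 reach_sym rtranclp_trans by metis
  then obtain xs where "rtrancl_path (adj ?W) z1 xs z2" using rtranclp_eq_rtrancl_path by metis
  then obtain xs' where p: "rtrancl_path (adj ?W) z1 xs' z2" "distinct (z1 # xs')"
    using rtrancl_path_distinct by metis
  have "xs' \<noteq> []" using p(1) ne by (auto elim: rtrancl_path.cases)
  then obtain w ws where xs': "xs' = w # ws" by (cases xs') auto
  have aw: "adj ?W z1 w" using p(1) xs' by (auto elim: rtrancl_path.cases)
  have "level w = level z1 + 1"
  proof (rule ccontr)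
    assume "level w \<noteq> level z1 + 1"
    then have "level z1 = level w + 1" using F_adj_level[OF wc_edges_subset_F[OF aw]] by auto
    then have "well_connected F C S z1" using wc_edge_away_from_root_wc[OF adj_sym[OF aw]] by simp
    then show False using o1 open_node_def by blast
  qed
  then have "well_connected F C S z2"
    using wc_path_away_from_root_wc[OF p \<open>xs' \<noteq> []\<close>] xs' by simp
  then show False using o2 open_node_def by blast
qed

context
  fixes y :: "nat \<Rightarrow> nat \<Rightarrow> real"
  assumes y: "y \<in> TP N1 N2 u v" "supp y = C"
begin

text \<open>The \<open>wc_subtree\<close> of a well-connected demand node whose \<open>-\<close>edge is not in \<open>C\<close> is closed
  under the edges of \<open>F\<close> and of \<open>C\<close>, hence by non-degeneracy contains every node.\<close>
lemma wc_subtree_covers_nodes: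
  assumes b: "b < N2" and wb: "well_connected F C S (Dem b)"
    and no_minus: "\<And>a. (a, b) \<in> C \<Longrightarrow> \<not> minus_edge F ds (a, b)"
    and x: "x \<in> nodes N1 N2"
  shows "x \<in> wc_subtree F ds C S (Dem b)"
proof -
  obtain yF where yF: "yF \<in> TP N1 N2 u v" "supp yF = F" using F_point by blast
  let ?W = "wc_subtree F ds C S (Dem b)"
  define I where "I = {a. a < N1 \<and> Sup a \<in> ?W}"
  define J where "J = {b'. b' < N2 \<and> Dem b' \<in> ?W}"
  have "I = {..<N1} \<and> J = {..<N2}"
  proof (rule closed_index_sets_full[OF yF(1) y(1)])
    show "I \<subseteq> {..<N1}" "J \<subseteq> {..<N2}" unfolding I_def J_def by auto
    show "I \<noteq> {} \<or> J \<noteq> {}" using b wc_subtree.root unfolding J_def by blast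
  next
    fix a b' assume "a \<in> I" "b' < N2" "yF a b' \<noteq> 0"
    then show "b' \<in> J"
      using wc_subtree_descend_F[of a "Dem b" b'] yF(2) unfolding I_def J_def supp_def by auto
  next
    fix b' a assume a: "b' \<in> J" "a < N1" "y a b' \<noteq> 0"
    then have W: "Dem b' \<in> ?W" and aC: "(a, b') \<in> C" using y(2) J_def supp_def by auto
    have "well_connected F C S (Dem b')" using wc_subtree_well_connected[OF W] wb by blast
    then have "Sup a \<in> ?W" using wc_subtree_descend_C[OF W _ aC] no_minus aC by blast
    then show "a \<in> I" using a I_def by auto
  qed
  then show ?thesis using x unfolding I_def J_def nodes_def by auto
qed

lemma fully_shaded_if_root_wc:
  assumes C: "spanning_tree N1 N2 C" and root_wc: "well_connected F C S (Dem ds)"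
  shows "S = C \<and> C = F"
proof -
  have "well_connected F C S x" if "x \<in> nodes N1 N2" for x
    using wc_subtree_covers_nodes[OF ds root_wc _ that] minus_edge_not_root
      wc_subtree_well_connected root_wc by blast
  then have "C \<subseteq> S"
    using spanning_tree_edge_range[OF C] well_connected_Dem Dem_in_nodes by fast
  then have "S = C" using S by blast
  then have "C \<subseteq> F" using S by blast
  moreover have "card C = card F" using C F_spanning_tree unfolding spanning_tree_def by simp
  ultimately show ?thesis
    using card_subset_eq[OF spanning_tree_finite[OF F_spanning_tree]] \<open>S = C\<close> by simp
qed

lemma minus_edge_in_tree_if_wc:
  assumes b: "b < N2" and wb: "well_connected F C S (Dem b)" and m: "minus_edge F ds (a, b)"
  shows "(a, b) \<in> C"
proof (rule ccontr)
  assume "(a, b) \<notin> C"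
  then have "Dem ds \<in> wc_subtree F ds C S (Dem b)"
    using wc_subtree_covers_nodes[OF b wb] minus_edge_unique[OF m] root_node by blast
  then have "level (Dem b) < level (Dem ds)" using wc_subtree_level minus_edge_not_root[OF m] by blast
  then show False by simp
qed

text \<open>If the well-connected component of \<open>x\<close> had no open node, it would be closed under the edges
  of \<open>F\<close> and of \<open>C\<close>, hence contain \<open>\<delta>\<^sup>*\<close>.\<close>
lemma wc_component_has_open_node:
  assumes C: "C \<subseteq> {..<N1} \<times> {..<N2}" and root_open: "\<not> well_connected F C S (Dem ds)"
    and x: "x \<in> nodes N1 N2"
  shows "\<exists>z. reach (wc_edges F C S) x z \<and> open_node N1 N2 F C S z"
proof (rule ccontr)
  let ?W = "wc_edges F C S"
  assume "\<not> ?thesis"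
  moreover have "?W \<subseteq> {..<N1} \<times> {..<N2}" using C S unfolding wc_edges_def by auto
  ultimately have wc: "well_connected F C S z" if "reach ?W x z" for z
    using that reach_nodes[OF that _ x] unfolding open_node_def by blast
  obtain yF where yF: "yF \<in> TP N1 N2 u v" "supp yF = F" using F_point by blast
  define I where "I = {a. a < N1 \<and> reach ?W x (Sup a)}"
  define J where "J = {b. b < N2 \<and> reach ?W x (Dem b)}"
  have "I = {..<N1} \<and> J = {..<N2}"
  proof (rule closed_index_sets_full[OF yF(1) y(1)])
    show "I \<subseteq> {..<N1}" "J \<subseteq> {..<N2}" unfolding I_def J_def by auto
    show "I \<noteq> {} \<or> J \<noteq> {}" using x unfolding I_def J_def nodes_def by auto
  next
    fix a b assume a: "a \<in> I" "b < N2" "yF a b \<noteq> 0"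
    then have r: "reach ?W x (Sup a)" using I_def by auto
    have "(a, b) \<in> F" using a yF(2) supp_def by auto
    then have "(a, b) \<in> ?W" using wc[OF r] unfolding well_connected_Sup wc_edges_def by auto
    then show "b \<in> J" using r a unfolding J_def by (auto intro: reach_step)
  next
    fix b a assume a: "b \<in> J" "a < N1" "y a b \<noteq> 0"
    then have r: "reach ?W x (Dem b)" using J_def by auto
    have "(a, b) \<in> C" using a y(2) supp_def by auto
    then have "(a, b) \<in> ?W" using wc[OF r] unfolding well_connected_Dem wc_edges_def by auto
    then show "a \<in> I" using r a unfolding I_def by (auto intro: reach_step)
  qed
  then have "reach ?W x (Dem ds)" using ds unfolding J_def by auto
  then show False using wc root_open by blast
qed

lemma UNO_if_invariants:
  assumes "C \<subseteq> {..<N1} \<times> {..<N2}" and "\<not> well_connected F C S (Dem ds)"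
  shows "UNO N1 N2 F C S"
  unfolding UNO_def using wc_component_has_open_node[OF assms] wc_component_open_node_unique by blast

end

end

end

section \<open>One shading step\<close>

locale shading_step = rooted_TP +
  fixes C S C' S' :: "(nat \<times> nat) set" and i j :: nat
  assumes vertex_tree_C: "vertex_tree N1 N2 u v C" and S_subset: "S \<subseteq> C \<inter> F"
    and noplus: "\<forall>e\<in>S. plus_edge F ds e \<longrightarrow> \<not> open_node N1 N2 F C S (Sup (fst e))"
    and i: "i < N1" and SIN_i: "SIN F ds C S i"
    and choice: "if (\<exists>j'. (i, j') \<in> F - S \<and> minus_edge F ds (i, j'))
                 then minus_edge F ds (i, j) \<and> (i, j) \<notin> S
                 else plus_edge F ds (i, j)"
    and shade: "shade N1 N2 u v F C S (i, j) C' S'"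
begin

abbreviation wc where "wc \<equiv> well_connected F C S"
abbreviation wc' where "wc' \<equiv> well_connected F C' S'"

lemma C_spanning_tree: "spanning_tree N1 N2 C"
  using vertex_tree_spanning_tree[OF vertex_tree_C] .

lemma e_in_F: "(i, j) \<in> F" and e_notin_S: "(i, j) \<notin> S"
  using shade unfolding shade_def by auto

lemma j: "j < N2"
  using spanning_tree_edge_range[OF F_spanning_tree e_in_F] by simp

lemma choice_cases:
  "minus_edge F ds (i, j) \<or> (plus_edge F ds (i, j) \<and> (\<forall>b. minus_edge F ds (i, b) \<longrightarrow> (i, b) \<in> S))"
  using choice minus_edge_def by (auto split: if_splits)

lemma shaded_plus_edge_wc: "(a, b) \<in> S \<Longrightarrow> plus_edge F ds (a, b) \<Longrightarrow> wc (Sup a)"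
  using noplus spanning_tree_edge_range[OF F_spanning_tree, of a b]
  unfolding open_node_def plus_edge_def by fastforce

lemma i_open: "\<not> wc (Sup i)"
  using e_in_F e_notin_S well_connected_Sup by blast

lemma plus_edge_at_i_unshaded: "plus_edge F ds (i, b) \<Longrightarrow> (i, b) \<notin> S"
  using shaded_plus_edge_wc i_open by blast

lemma odd_shaded_edge: "odd_edge C i g \<Longrightarrow> g \<in> S \<Longrightarrow> minus_edge F ds g \<and> wc (Dem (snd g))"
  using SIN_i unfolding SIN_def by blast

lemma odd_edge_C_iff: "odd_edge C i g \<longleftrightarrow> g \<in> C \<and> reach (C - {g}) (Sup i) (Sup (fst g))"
  using odd_edge_iff_reach[OF C_spanning_tree i] .

lemma shaded_edge_at_i: "(i, b) \<in> S \<Longrightarrow> minus_edge F ds (i, b) \<and> wc (Dem b)"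
  using odd_shaded_edge[of "(i, b)"] odd_edge_C_iff S_subset by auto

lemma odd_edge_level:
  "(a, b) \<in> C \<Longrightarrow> odd_edge C i (a, b) \<longleftrightarrow> gdist C (Sup i) (Dem b) = gdist C (Sup i) (Sup a) + 1"
  using odd_edge_C_iff spanning_tree_side_level(1)[OF C_spanning_tree _ Sup_in_nodes[THEN iffD2, OF i]]
  by auto

lemma C_edge_level:
  assumes "(a, b) \<in> C"
  shows "gdist C (Sup i) (Dem b) = gdist C (Sup i) (Sup a) + 1 \<or>
    gdist C (Sup i) (Sup a) = gdist C (Sup i) (Dem b) + 1"
proof -
  have "reach C (Sup i) (Sup a)"
    using spanning_tree_reach[OF C_spanning_tree] spanning_tree_edge_range[OF C_spanning_tree assms] i
    by simp
  then show ?thesis using gdist_adj[of C "Sup i" "Sup a" "Dem b"] assms by simp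
qed

lemma even_edge_level:
  "(a, b) \<in> C \<Longrightarrow> \<not> odd_edge C i (a, b) \<longleftrightarrow> gdist C (Sup i) (Sup a) = gdist C (Sup i) (Dem b) + 1"
  using odd_edge_level C_edge_level by fastforce

text \<open>The invariant (2) and the invariant implied by (SIN) hold before the step: a shaded
  \<open>-\<close>edge \<open>(a, b)\<close> at a well-connected supply node \<open>a\<close> is odd with respect to \<open>\<sigma>\<close>, because the
  \<open>+\<close>edge at \<open>a\<close> is shaded too and both cannot point towards \<open>\<sigma>\<close>.\<close>
lemma invariants_before: "plus_edges_wc C S" "minus_edges_wc C S"
proof -
  show "plus_edges_wc C S" using shaded_plus_edge_wc unfolding plus_edges_wc_def by blast
  have "wc (Dem b)" if S: "(a, b) \<in> S" and m: "minus_edge F ds (a, b)" and wa: "wc (Sup a)" for a b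
  proof (rule ccontr)
    assume nb: "\<not> wc (Dem b)"
    have C: "(a, b) \<in> C" using S S_subset by blast
    have "\<not> odd_edge C i (a, b)" using odd_shaded_edge S nb by auto
    then have l: "gdist C (Sup i) (Sup a) = gdist C (Sup i) (Dem b) + 1" using even_edge_level[OF C] by simp
    obtain p where p: "plus_edge F ds (a, p)"
      using plus_edge_exists spanning_tree_edge_range[OF F_spanning_tree] m minus_edge_def by blast
    have pF: "(a, p) \<in> F" using p plus_edge_def by blast
    then have pS: "(a, p) \<in> S" using wa unfolding well_connected_Sup by blast
    then have pC: "(a, p) \<in> C" using S_subset by blast
    have "p \<noteq> b" using p m plus_not_minus by blast
    have "odd_edge C i (a, p)"
    proof (rule ccontr)
      assume "\<not> odd_edge C i (a, p)"
      then have "gdist C (Sup i) (Sup a) = gdist C (Sup i) (Dem p) + 1" using even_edge_level[OF pC] by simp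
      moreover have "adj C (Dem p) (Sup a)" "adj C (Dem b) (Sup a)" using pC C by simp_all
      ultimately have "Dem p = Dem b"
        using spanning_tree_unique_parent[OF C_spanning_tree Sup_in_nodes[THEN iffD2, OF i],
            of "Dem p" "Sup a" "Dem b"] l by metis
      then show False using \<open>p \<noteq> b\<close> by simp
    qed
    then have "minus_edge F ds (a, p)" using odd_shaded_edge pS by auto
    then show False using p plus_not_minus by blast
  qed
  then show "minus_edges_wc C S" unfolding minus_edges_wc_def by blast
qed

context
  fixes C2 S2 :: "(nat \<times> nat) set"
  assumes S2: "S2 = insert (i, j) S" and S_C2: "S \<subseteq> C2" and e_C2: "(i, j) \<in> C2"
begin

lemma wc_i_after_iff: "well_connected F C2 S2 (Sup i) \<longleftrightarrow> plus_edge F ds (i, j)"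
proof
  assume w: "well_connected F C2 S2 (Sup i)"
  show "plus_edge F ds (i, j)"
  proof (rule ccontr)
    assume np: "\<not> plus_edge F ds (i, j)"
    obtain p where p: "plus_edge F ds (i, p)" using plus_edge_exists i by blast
    then have "(i, p) \<in> S2" using w unfolding well_connected_Sup plus_edge_def by blast
    moreover have "(i, p) \<noteq> (i, j)" using p np by auto
    ultimately show False using plus_edge_at_i_unshaded[OF p] S2 by auto
  qed
next
  assume pl: "plus_edge F ds (i, j)"
  then have ms: "\<forall>b. minus_edge F ds (i, b) \<longrightarrow> (i, b) \<in> S"
    using choice_cases plus_not_minus by blast
  have "(i, b) \<in> C2 \<and> (i, b) \<in> S2" if bF: "(i, b) \<in> F" for b
  proof (cases "plus_edge F ds (i, b)")
    case True then have "b = j" using plus_edge_unique pl by blast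
    then show ?thesis using S2 e_C2 by simp
  next
    case False then have "(i, b) \<in> S" using ms plus_or_minus_edge bF by blast
    then show ?thesis using S2 S_C2 by auto
  qed
  then show "well_connected F C2 S2 (Sup i)" unfolding well_connected_Sup by blast
qed

lemma invariants_after:
  assumes wc_Sup_same: "\<And>x. x \<noteq> i \<Longrightarrow> well_connected F C2 S2 (Sup x) \<longleftrightarrow> wc (Sup x)"
    and wc_Dem_mono: "\<And>z. wc (Dem z) \<Longrightarrow> well_connected F C2 S2 (Dem z)"
  shows "plus_edges_wc C2 S2" and "minus_edges_wc C2 S2"
proof -
  note wc_i = wc_i_after_iff
  show "plus_edges_wc C2 S2" unfolding plus_edges_wc_def
  proof (intro allI impI)
    fix a b assume ab: "(a, b) \<in> S2" and p: "plus_edge F ds (a, b)"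
    show "well_connected F C2 S2 (Sup a)"
    proof (cases "(a, b) = (i, j)")
      case False
      then have abS: "(a, b) \<in> S" using ab S2 by auto
      then have "a \<noteq> i" using plus_edge_at_i_unshaded p by auto
      then show ?thesis using wc_Sup_same shaded_plus_edge_wc abS p by blast
    qed (use wc_i p in auto)
  qed
  show "minus_edges_wc C2 S2" unfolding minus_edges_wc_def
  proof (intro allI impI)
    fix a b assume ab: "(a, b) \<in> S2" and m: "minus_edge F ds (a, b)"
      and wa: "well_connected F C2 S2 (Sup a)"
    show "well_connected F C2 S2 (Dem b)"
    proof (cases "(a, b) = (i, j)")
      case True then show ?thesis using wc_i m wa plus_not_minus by auto
    next
      case False
      then have abS: "(a, b) \<in> S" using ab S2 by auto
      show ?thesis
      proof (cases "a = i")
        case True then show ?thesis using shaded_edge_at_i abS wc_Dem_mono by blast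
      next
        case False then show ?thesis
          using wc_Sup_same[OF False] wa invariants_before(2) abS m wc_Dem_mono
          unfolding minus_edges_wc_def by blast
      qed
    qed
  qed
qed

end

definition shading_continues :: bool where
  "shading_continues \<longleftrightarrow> S' \<noteq> C' \<and> UNO N1 N2 F C' S' \<and>
     (\<exists>a. open_node N1 N2 F C' S' (Sup a) \<and> SIN F ds C' S' a) \<and>
     (\<forall>d'. (if (i, j) \<in> C then d' = j else (\<exists>a. (a, d') \<in> C - C')) \<longrightarrow>
        (\<forall>a. (a, d') \<in> C' - S' \<longrightarrow> open_node N1 N2 F C' S' (Sup a) \<and> SIN F ds C' S' a) \<and>
        ((\<forall>a. (a, d') \<notin> C' - S') \<longrightarrow>
           (\<forall>a. minus_edge F ds (a, d') \<longrightarrow> open_node N1 N2 F C' S' (Sup a) \<and> SIN F ds C' S' a)))"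

definition shading_outcome :: bool where
  "shading_outcome \<longleftrightarrow>
     (wc' (Dem ds) \<longrightarrow> S' = C' \<and> C' = F) \<and> (\<not> wc' (Dem ds) \<longrightarrow> shading_continues)"

text \<open>Everything except the choice of the new node \<open>\<sigma>'\<close> or \<open>\<sigma>''\<close> at the demand node \<open>\<delta>'\<close> follows from
  the invariants.\<close>
lemma shading_outcomeI:
  assumes C': "spanning_tree N1 N2 C'" and y': "y' \<in> TP N1 N2 u v" "supp y' = C'"
    and S': "S' \<subseteq> C' \<inter> F" and inv: "plus_edges_wc C' S'" "minus_edges_wc C' S'"
    and d0: "d0 < N2"
    and delta': "\<And>d'. (if (i, j) \<in> C then d' = j else (\<exists>a. (a, d') \<in> C - C')) \<Longrightarrow> d' = d0"
    and unshaded: "\<And>a. (a, d0) \<in> C' - S' \<Longrightarrow> open_node N1 N2 F C' S' (Sup a) \<and> SIN F ds C' S' a"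
    and all_shaded: "\<And>a. (\<forall>a'. (a', d0) \<notin> C' - S') \<Longrightarrow> minus_edge F ds (a, d0) \<Longrightarrow>
      open_node N1 N2 F C' S' (Sup a) \<and> SIN F ds C' S' a"
  shows shading_outcome
  unfolding shading_outcome_def
proof (rule conjI; intro impI)
  assume "wc' (Dem ds)"
  then show "S' = C' \<and> C' = F" using fully_shaded_if_root_wc[OF S' inv y' C'] by blast
next
  assume root_open: "\<not> wc' (Dem ds)"
  then have "S' \<noteq> C'" unfolding well_connected_Dem by blast
  moreover have "UNO N1 N2 F C' S'"
    using UNO_if_invariants[OF S' inv y' spanning_tree_subset[OF C'] root_open] .
  moreover have "\<exists>a. open_node N1 N2 F C' S' (Sup a) \<and> SIN F ds C' S' a"
  proof (cases "\<exists>a. (a, d0) \<in> C' - S'")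
    case False
    then have "d0 \<noteq> ds" using root_open unfolding well_connected_Dem by blast
    then obtain a where "minus_edge F ds (a, d0)" using minus_edge_exists d0 by blast
    then show ?thesis using all_shaded False by blast
  qed (use unshaded in blast)
  ultimately show shading_continues unfolding shading_continues_def
    using delta' unshaded all_shaded by blast
qed

end

section \<open>Shading an edge of the current tree\<close>

locale in_tree_step = shading_step +
  assumes e_in_C: "(i, j) \<in> C"
begin

lemma C'_eq: "C' = C" and S'_eq: "S' = insert (i, j) S"
  using shade e_in_C unfolding shade_def by auto

lemma S'_subset: "S' \<subseteq> C' \<inter> F"
  using S_subset e_in_C e_in_F C'_eq S'_eq by blast

lemma wc_Sup_after: "x \<noteq> i \<Longrightarrow> wc' (Sup x) \<longleftrightarrow> wc (Sup x)"
  unfolding C'_eq S'_eq well_connected_Sup by auto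

lemma wc_Dem_after: "wc (Dem z) \<Longrightarrow> wc' (Dem z)"
  unfolding C'_eq S'_eq well_connected_Dem by auto

lemma invariants_after_shading: "plus_edges_wc C' S'" "minus_edges_wc C' S'"
  using invariants_after[OF S'_eq _ _ wc_Sup_after wc_Dem_after] S_subset e_in_C C'_eq by auto

lemma j_open: "\<not> wc (Dem j)"
  using e_in_C e_notin_S unfolding well_connected_Dem by blast

text \<open>From the other neighbours \<open>\<sigma>\<^sup>r\<close> of \<open>\<delta>\<^sup>j\<close> the tree looks as from \<open>\<sigma>\<^sup>i\<close>, except for the two edges
  at \<open>\<delta>\<^sup>j\<close>.\<close>
lemma odd_edge_from_neighbour:
  assumes r: "(r, j) \<in> C" and h: "h \<noteq> (r, j)" "h \<noteq> (i, j)"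
  shows "odd_edge C r h \<longleftrightarrow> odd_edge C i h"
proof -
  have r_range: "r < N1" using spanning_tree_edge_range[OF C_spanning_tree r] by simp
  have "adj (C - {h}) (Sup r) (Dem j)" "adj (C - {h}) (Dem j) (Sup i)" using r e_in_C h by simp_all
  then have "reach (C - {h}) (Sup r) (Sup i)" by (meson reach_step rtranclp.rtrancl_refl)
  then show ?thesis
    using odd_edge_iff_reach[OF C_spanning_tree r_range] odd_edge_C_iff reach_sym rtranclp_trans
    by meson
qed

lemma shaded_edge_not_odd_from_neighbour:
  assumes r: "(r, j) \<in> C" "r \<noteq> i"
  shows "\<not> odd_edge C r (i, j)"
proof
  assume "odd_edge C r (i, j)"
  moreover have r_range: "r < N1" using spanning_tree_edge_range[OF C_spanning_tree r(1)] by simp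
  ultimately have "reach (C - {(i, j)}) (Sup r) (Sup i)"
    using odd_edge_iff_reach[OF C_spanning_tree r_range] by simp
  moreover have "reach (C - {(i, j)}) (Sup r) (Dem j)" using r by (simp add: r_into_rtranclp)
  ultimately show False using spanning_tree_side_unique[OF C_spanning_tree e_in_C, of "Sup r"] by blast
qed

lemma SIN_at_neighbour:
  assumes r: "(r, j) \<in> C" "r \<noteq> i"
    and rj: "(r, j) \<in> S' \<Longrightarrow> minus_edge F ds (r, j) \<and> wc' (Dem j)"
  shows "SIN F ds C' S' r"
  unfolding SIN_def
proof (intro allI impI)
  fix g assume "odd_edge C' r g"
  then have odd: "odd_edge C r g" using C'_eq by simp
  show "g \<notin> S' \<or> minus_edge F ds g \<and> wc' (Dem (snd g))"
  proof (cases "g = (r, j)")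
    case False
    moreover have "g \<noteq> (i, j)" using shaded_edge_not_odd_from_neighbour[OF r] odd by auto
    ultimately have "odd_edge C i g" "g \<in> S' \<longrightarrow> g \<in> S"
      using odd_edge_from_neighbour[OF r(1)] odd S'_eq by auto
    then show ?thesis using odd_shaded_edge wc_Dem_after by blast
  qed (use rj in auto)
qed

lemma SIN_at_i:
  assumes m: "minus_edge F ds (i, j)" and wj: "wc' (Dem j)"
  shows "SIN F ds C' S' i"
  unfolding SIN_def
proof (intro allI impI)
  fix g assume "odd_edge C' i g"
  then have odd: "odd_edge C i g" using C'_eq by simp
  show "g \<notin> S' \<or> minus_edge F ds g \<and> wc' (Dem (snd g))"
  proof (cases "g = (i, j)")
    case False
    then have "g \<in> S' \<longrightarrow> g \<in> S" using S'_eq by auto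
    then show ?thesis using odd_shaded_edge[OF odd] wc_Dem_after by blast
  qed (use m wj in auto)
qed

lemma unshaded_neighbour_open:
  assumes a: "(a, j) \<in> C' - S'"
  shows "open_node N1 N2 F C' S' (Sup a)"
proof -
  have ai: "a \<noteq> i" and aC: "(a, j) \<in> C" using a S'_eq C'_eq by auto
  have a_range: "a < N1" using spanning_tree_edge_range[OF C_spanning_tree aC] by simp
  have "\<not> wc (Sup a)"
  proof
    assume wa: "wc (Sup a)"
    obtain p where p: "plus_edge F ds (a, p)" using plus_edge_exists a_range by blast
    then have pS: "(a, p) \<in> S" using wa unfolding well_connected_Sup plus_edge_def by blast
    then have pC: "(a, p) \<in> C" using S_subset by blast
    have "p \<noteq> j" using pS a S'_eq by auto
    have "odd_edge C a (a, p)" using odd_edge_iff_reach[OF C_spanning_tree a_range] pC by simp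
    then have "odd_edge C i (a, p)" using odd_edge_from_neighbour[OF aC] \<open>p \<noteq> j\<close> ai by auto
    then have "minus_edge F ds (a, p)" using odd_shaded_edge pS by auto
    then show False using p plus_not_minus by blast
  qed
  then show ?thesis using wc_Sup_after[OF ai] a_range unfolding open_node_def by auto
qed

lemma C'_point: obtains y where "y \<in> TP N1 N2 u v" "supp y = C'"
  using vertex_tree_C C'_eq unfolding vertex_tree_def is_vertex_def by blast

lemma minus_neighbour_open:
  assumes wj: "wc' (Dem j)" and m: "minus_edge F ds (a, j)"
  shows "open_node N1 N2 F C' S' (Sup a) \<and> SIN F ds C' S' a"
proof -
  obtain y where y: "y \<in> TP N1 N2 u v" "supp y = C'" using C'_point .
  have aC: "(a, j) \<in> C"
    using minus_edge_in_tree_if_wc[OF S'_subset invariants_after_shading y j wj m] C'_eq by blast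
  have a_range: "a < N1" using spanning_tree_edge_range[OF C_spanning_tree aC] by simp
  show ?thesis
  proof (cases "a = i")
    case True
    then have "\<not> wc' (Sup i)"
      using wc_i_after_iff[OF S'_eq _ _] S_subset e_in_C C'_eq m plus_not_minus by auto
    then show ?thesis using True i SIN_at_i m wj unfolding open_node_def by auto
  next
    case False
    have aS: "(a, j) \<in> S" using wj aC False unfolding C'_eq S'_eq well_connected_Dem by auto
    have "\<not> wc' (Sup a)"
      using wc_Sup_after[OF False] invariants_before(2) aS m j_open
      unfolding minus_edges_wc_def by blast
    then show ?thesis using SIN_at_neighbour[OF aC False] m wj a_range unfolding open_node_def by auto
  qed
qed

lemma shading_outcome_in_tree: shading_outcome
proof -
  obtain y where y: "y \<in> TP N1 N2 u v" "supp y = C'" using C'_point .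
  show ?thesis
  proof (rule shading_outcomeI[OF _ y S'_subset invariants_after_shading j])
    show "spanning_tree N1 N2 C'" using C_spanning_tree C'_eq by simp
    show "\<And>d'. (if (i, j) \<in> C then d' = j else (\<exists>a. (a, d') \<in> C - C')) \<Longrightarrow> d' = j"
      using e_in_C by simp
  next
    fix a assume a: "(a, j) \<in> C' - S'"
    then have "a \<noteq> i" "(a, j) \<in> C" using S'_eq C'_eq by auto
    then show "open_node N1 N2 F C' S' (Sup a) \<and> SIN F ds C' S' a"
      using unshaded_neighbour_open[OF a] SIN_at_neighbour a by blast
  next
    fix a assume "\<forall>a. (a, j) \<notin> C' - S'" and "minus_edge F ds (a, j)"
    then show "open_node N1 N2 F C' S' (Sup a) \<and> SIN F ds C' S' a"
      using minus_neighbour_open unfolding well_connected_Dem by blast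
  qed
qed

end

section \<open>Shading after a pivot\<close>

locale pivot_step = shading_step + pivot_data N1 N2 u v C C' "(i, j)" y d t
  for y d :: "nat \<Rightarrow> nat \<Rightarrow> real" and t :: real +
  fixes a' d' :: nat
  assumes deleted: "C - C' = {(a', d')}"
begin

abbreviation f where "f \<equiv> (a', d')"

lemma f_in_C: "f \<in> C" and f_notin_C': "f \<notin> C'"
  using deleted by auto

lemma f_range: "a' < N1" "d' < N2"
  using spanning_tree_edge_range[OF C_spanning_tree f_in_C] by auto

lemma S'_def: "S' = insert (i, j) S - {f}"
  using shade e_notin_C deleted unfolding shade_def by auto

lemma C'_exchange: "C' = insert (i, j) (C - {f})"
  using C'_eq[OF deleted] .

lemma spanning_tree_C': "spanning_tree N1 N2 C'"
  using C'_spanning_tree[OF deleted] .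

lemma d_f: "d a' d' = -1"
  using deleted_edge_direction deleted by blast

text \<open>The direction \<open>d\<close> is a circulation on the cycle through \<open>(i, j)\<close> and \<open>f\<close>: across the cut
  given by the side of \<open>\<delta>\<^sup>d\<^sup>'\<close> in \<open>C - {f}\<close> it carries \<open>-1\<close> inwards on \<open>f\<close>, which must be
  balanced by \<open>(i, j)\<close>.\<close>
lemma deleted_edge_sides: "reach (C - {f}) (Sup i) (Sup a')" "reach (C - {f}) (Dem d') (Dem j)"
proof -
  let ?R = "reach (C - {f}) (Dem d')"
  define I where "I = {a. a < N1 \<and> ?R (Sup a)}"
  define J where "J = {b. b < N2 \<and> ?R (Dem b)}"
  have I: "I \<subseteq> {..<N1}" and J: "J \<subseteq> {..<N2}" unfolding I_def J_def by auto
  have a'I: "a' \<notin> I"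
    using spanning_tree_bridge[OF C_spanning_tree f_in_C] reach_sym unfolding I_def by blast
  have d'J: "d' \<in> J" using f_range J_def by auto
  have crossing: "a \<in> I \<longleftrightarrow> b \<in> J" if "(a, b) \<in> C" "(a, b) \<noteq> f" for a b
  proof -
    have "adj (C - {f}) (Dem b) (Sup a)" "adj (C - {f}) (Sup a) (Dem b)" using that by simp_all
    then show ?thesis
      using spanning_tree_edge_range[OF C_spanning_tree that(1)] reach_step unfolding I_def J_def by blast
  qed
  have support: "(a, b) \<in> {f, (i, j)}" if "d a b \<noteq> 0" "a \<in> I \<longleftrightarrow> b \<notin> J" for a b
    using d_nonzero[OF that(1)] crossing that(2) by auto
  have "insert f (if i \<notin> I \<and> j \<in> J then {(i, j)} else {}) = {f, (i, j)} \<inter> (({..<N1} - I) \<times> J)"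
    using a'I d'J f_range i j by auto
  also have "(\<Sum>g\<in>\<dots>. d (fst g) (snd g)) = flow_in N1 d I J"
    by (rule flow_in_sparse[OF J, symmetric]) (use support in auto)
  also have "\<dots> = flow_out N2 d I J"
    using circulation_flow_balance[OF d_rows d_cols I J] .
  also have "\<dots> = (\<Sum>g\<in>{f, (i, j)} \<inter> (I \<times> ({..<N2} - J)). d (fst g) (snd g))"
    by (rule flow_out_sparse[OF I]) (use support in auto)
  also have "{f, (i, j)} \<inter> (I \<times> ({..<N2} - J)) = (if i \<in> I \<and> j \<notin> J then {(i, j)} else {})"
    using a'I d'J f_range i j by auto
  finally have "i \<notin> I \<and> j \<in> J"
    using d_f d_e e_notin_C f_in_C by (auto split: if_splits)
  then have "\<not> ?R (Sup i)" "?R (Dem j)" using I_def J_def i by auto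
  then show "reach (C - {f}) (Sup i) (Sup a')" "reach (C - {f}) (Dem d') (Dem j)"
    using spanning_tree_two_sides[OF C_spanning_tree f_in_C, of "Sup i"] i reach_sym by auto
qed

lemma i_not_reach_d': "\<not> reach (C - {f}) (Sup i) (Dem d')"
  using deleted_edge_sides spanning_tree_side_unique[OF C_spanning_tree f_in_C, of "Sup i"] by blast

lemma deleted_edge_odd: "odd_edge C i f"
  using deleted_edge_sides odd_edge_C_iff f_in_C by simp

text \<open>Were \<open>f\<close> shaded, the following node set would be entered by \<open>C\<close> only through \<open>f\<close> and left by
  no edge of \<open>F\<close>. Comparing flows across it, \<open>y\<^sub>F\<close> gives \<open>v(J) - u(I) > 0\<close>, so \<open>y\<close> would have to
  carry more on \<open>f\<close> than on the outgoing edge of \<open>C\<close> on which \<open>d = -1\<close>, and the pivot could not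
  delete \<open>f\<close>.\<close>
definition cut_nodes :: "node set" where
  "cut_nodes = wc_subtree F ds C S (Dem d') \<union>
     (if Dem j \<in> wc_subtree F ds C S (Dem d') then wc_subtree F ds C S (Sup i) else {})"

definition cut_supply :: "nat set" where
  "cut_supply = {a. a < N1 \<and> Sup a \<in> cut_nodes}"

definition cut_demand :: "nat set" where
  "cut_demand = {b. b < N2 \<and> Dem b \<in> cut_nodes}"

lemma cut_supply_subset: "cut_supply \<subseteq> {..<N1}" and cut_demand_subset: "cut_demand \<subseteq> {..<N2}"
  unfolding cut_supply_def cut_demand_def by auto

context
  assumes f_shaded: "f \<in> S"
begin

lemma f_minus_edge: "minus_edge F ds f" and d'_wc: "wc (Dem d')"
  using odd_shaded_edge[OF deleted_edge_odd f_shaded] by auto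

lemma f_level: "level (Dem d') = level (Sup a') + 1"
  using f_minus_edge minus_edge_level by simp

lemma S_subset_F: "S \<subseteq> F"
  using S_subset by blast

lemma wc_in_subtree_d': "z \<in> wc_subtree F ds C S (Dem d') \<Longrightarrow> wc z"
  using wc_subtree_well_connected d'_wc by blast

lemma i_notin_subtree_d': "Sup i \<notin> wc_subtree F ds C S (Dem d')"
  using wc_in_subtree_d' i_open by blast

lemma plus_edge_if_j_in_subtree_d':
  assumes j_in: "Dem j \<in> wc_subtree F ds C S (Dem d')"
  shows "plus_edge F ds (i, j)"
proof (rule ccontr)
  assume "\<not> ?thesis"
  then have m: "minus_edge F ds (i, j)" using plus_or_minus_edge e_in_F by blast
  show False
  proof (cases "j = d'")
    case True
    then have "i = a'" using minus_edge_unique m f_minus_edge by blast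
    then show False using True e_notin_C f_in_C by simp
  next
    case False
    then have "Sup i \<in> wc_subtree F ds C S (Dem d')"
      using wc_subtree_parent[OF S_subset_F j_in] m minus_edge_level by simp
    then show False using i_notin_subtree_d' by simp
  qed
qed

lemma cut_nodes_cases:
  "x \<in> cut_nodes \<longleftrightarrow> x \<in> wc_subtree F ds C S (Dem d') \<or>
    (Dem j \<in> wc_subtree F ds C S (Dem d') \<and> x \<in> wc_subtree F ds C S (Sup i))"
  unfolding cut_nodes_def by auto

lemma cut_nodes_wc: "x \<in> cut_nodes \<Longrightarrow> x \<noteq> Sup i \<Longrightarrow> wc x"
  using cut_nodes_cases wc_in_subtree_d' wc_subtree_well_connected by blast

lemma i_in_cut_iff_j: "Sup i \<in> cut_nodes \<longleftrightarrow> Dem j \<in> cut_nodes"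
  using cut_nodes_cases i_notin_subtree_d' wc_subtree.root by blast

lemma d'_in_cut: "Dem d' \<in> cut_nodes"
  using cut_nodes_cases wc_subtree.root by blast

lemma a'_notin_cut: "Sup a' \<notin> cut_nodes"
proof
  assume a: "Sup a' \<in> cut_nodes"
  have "Sup a' \<notin> wc_subtree F ds C S (Dem d')" using wc_subtree_level f_level by fastforce
  then have j_in: "Dem j \<in> wc_subtree F ds C S (Dem d')"
    and "Sup a' \<in> wc_subtree F ds C S (Sup i)" using a cut_nodes_cases by blast+
  then have "Dem d' \<in> wc_subtree F ds C S (Sup i)"
    using wc_subtree.step[of "Sup a'"] f_shaded f_level d'_wc by simp
  then have "Dem j \<in> wc_subtree F ds C S (Sup i)" using wc_subtree_trans j_in by blast
  then have "level (Sup i) \<le> level (Dem j)" using wc_subtree_level by blast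
  then show False using plus_edge_if_j_in_subtree_d'[OF j_in] plus_edge_level by simp
qed

lemma cut_nodes_closed_C:
  assumes b: "Dem b \<in> cut_nodes" and ab: "(a, b) \<in> C" "(a, b) \<noteq> f"
  shows "Sup a \<in> cut_nodes"
proof -
  have "wc (Dem b)" using cut_nodes_wc b by blast
  moreover have "minus_edge F ds (a, b) \<Longrightarrow> b \<noteq> d'"
    using minus_edge_unique f_minus_edge ab(2) by blast
  ultimately show ?thesis
    using b wc_subtree_descend_C[OF S_subset invariants_before _ _ ab(1)] unfolding cut_nodes_cases by auto
qed

lemma cut_nodes_closed_F:
  assumes a: "Sup a \<in> cut_nodes" and ab: "(a, b) \<in> F"
  shows "Dem b \<in> cut_nodes"
proof (cases "Sup a \<in> wc_subtree F ds C S (Dem d')")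
  case True
  then show ?thesis using wc_subtree_descend_F[OF S_subset invariants_before] ab unfolding cut_nodes_cases by blast
next
  case False
  then have j_in: "Dem j \<in> wc_subtree F ds C S (Dem d')"
    and a_in: "Sup a \<in> wc_subtree F ds C S (Sup i)" using a cut_nodes_cases by blast+
  show ?thesis
  proof (cases "a = i")
    case False
    then show ?thesis using wc_subtree_descend_F[OF S_subset invariants_before a_in _ ab] j_in cut_nodes_cases by blast
  next
    case True
    have plus: "plus_edge F ds (i, j)" using plus_edge_if_j_in_subtree_d'[OF j_in] .
    consider "plus_edge F ds (a, b)" | "minus_edge F ds (a, b)" using plus_or_minus_edge ab by blast
    then show ?thesis
    proof cases
      case 1
      then have "b = j" using plus_edge_unique plus True by blast
      then show ?thesis using j_in cut_nodes_cases by blast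
    next
      case 2
      then have iS: "(i, b) \<in> S" using choice_cases plus plus_not_minus True by blast
      then have "Dem b \<in> wc_subtree F ds C S (Sup i)"
        using shaded_edge_at_i wc_subtree.step[OF wc_subtree.root] 2 True minus_edge_level by simp
      then show ?thesis using j_in cut_nodes_cases by blast
    qed
  qed
qed


lemma f_enters_cut: "a' \<notin> cut_supply" "d' \<in> cut_demand"
  using a'_notin_cut d'_in_cut f_range unfolding cut_supply_def cut_demand_def by auto

lemma flow_in_cut:
  assumes "\<And>a b. z a b \<noteq> 0 \<Longrightarrow> (a, b) \<in> insert (i, j) C"
  shows "flow_in N1 z cut_supply cut_demand = z a' d'"
proof -
  have "i \<in> cut_supply \<longleftrightarrow> j \<in> cut_demand"
    using i_in_cut_iff_j i j unfolding cut_supply_def cut_demand_def by simp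
  then have only_f: "(a, b) = f"
    if "a < N1" "a \<notin> cut_supply" "b \<in> cut_demand" "(a, b) \<in> insert (i, j) C" for a b
    using that cut_nodes_closed_C[of b a] unfolding cut_supply_def cut_demand_def by auto
  have "flow_in N1 z cut_supply cut_demand =
      (\<Sum>g\<in>{f} \<inter> (({..<N1} - cut_supply) \<times> cut_demand). z (fst g) (snd g))"
    by (rule flow_in_sparse[OF cut_demand_subset]) (use assms only_f in auto)
  also have "{f} \<inter> (({..<N1} - cut_supply) \<times> cut_demand) = {f}" using f_enters_cut f_range by auto
  finally show ?thesis by simp
qed

lemma flow_out_cut_F:
  assumes "\<And>a b. z a b \<noteq> 0 \<Longrightarrow> (a, b) \<in> F"
  shows "flow_out N2 z cut_supply cut_demand = 0"
  unfolding flow_out_def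
proof (intro sum.neutral ballI)
  fix a b assume "a \<in> cut_supply" "b \<in> {..<N2} - cut_demand"
  then show "z a b = 0"
    using cut_nodes_closed_F[of a b] assms unfolding cut_supply_def cut_demand_def by auto
qed

lemma cut_decreasing_edge:
  obtains a0 b0 where "a0 \<in> cut_supply" "b0 < N2" "b0 \<notin> cut_demand" "d a0 b0 = -1"
proof -
  have "flow_out N2 d cut_supply cut_demand = -1"
    using circulation_flow_balance[OF d_rows d_cols cut_supply_subset cut_demand_subset]
      flow_in_cut[of d] d_nonzero d_f by simp
  then have "\<not> (\<forall>a\<in>cut_supply. \<forall>b\<in>{..<N2} - cut_demand. 0 \<le> d a b)"
    unfolding flow_out_def by (smt (verit) sum_nonneg)
  then obtain a0 b0 where "a0 \<in> cut_supply" "b0 < N2" "b0 \<notin> cut_demand" "d a0 b0 < 0" by force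
  then show thesis using that d_values[rule_format, of a0 b0] by auto
qed

end

lemma deleted_edge_unshaded: "f \<notin> S"
proof
  assume f_shaded: "f \<in> S"
  let ?I = cut_supply and ?J = cut_demand
  note I = cut_supply_subset and J = cut_demand_subset
  obtain yF where yF: "yF \<in> TP N1 N2 u v" "supp yF = F" using F_point by blast
  obtain a0 b0 where ab0: "a0 \<in> ?I" "b0 < N2" "b0 \<notin> ?J" "d a0 b0 = -1"
    using cut_decreasing_edge[OF f_shaded] by blast
  then have "t \<le> y a0 b0" using step_le_decreasing_entry by simp
  also have "\<dots> \<le> flow_out N2 y ?I ?J"
    using entry_le_flow_out[OF I ab0(1-3)] TP_nonneg[OF y_TP] by blast
  also have "\<dots> < flow_in N1 y ?I ?J"
  proof -
    have "flow_out N2 yF ?I ?J = 0"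
      using flow_out_cut_F[OF f_shaded] yF(2) unfolding supp_def by blast
    moreover have "0 < yF a' d'"
      using f_shaded S_subset yF TP_nonneg[OF yF(1), of a' d'] unfolding supp_def by auto
    moreover have "yF a' d' \<le> flow_in N1 yF ?I ?J"
      using entry_le_flow_in[OF J f_range(1) f_enters_cut[OF f_shaded]] TP_nonneg[OF yF(1)] by blast
    ultimately show ?thesis using TP_flow_balance[OF y_TP I J] TP_flow_balance[OF yF(1) I J] by linarith
  qed
  also have "\<dots> = y a' d'" using flow_in_cut[OF f_shaded, of y] y_zero by blast
  finally have "0 < y a' d' + t * d a' d'" using d_f by simp
  then show False using f_notin_C' C'_def unfolding supp_def by auto
qed

lemma S'_eq: "S' = insert (i, j) S"
  using S'_def deleted_edge_unshaded e_notin_C f_in_C by auto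

lemma S_subset_C': "S \<subseteq> C'"
  using S_subset deleted_edge_unshaded C'_exchange by auto

lemma S'_subset: "S' \<subseteq> C' \<inter> F"
  using S_subset_C' S_subset e_in_C' e_in_F S'_eq by auto

lemma wc_Sup_after: "x \<noteq> i \<Longrightarrow> wc' (Sup x) \<longleftrightarrow> wc (Sup x)"
proof -
  assume "x \<noteq> i"
  then have "((x, b) \<in> C' \<and> (x, b) \<in> S') \<longleftrightarrow> ((x, b) \<in> C \<and> (x, b) \<in> S)" for b
    using S_subset_C' S_subset S'_eq deleted_edge_unshaded C'_exchange by auto
  then show ?thesis unfolding well_connected_Sup by simp
qed

lemma wc_Dem_after: "wc (Dem z) \<Longrightarrow> wc' (Dem z)"
  unfolding well_connected_Dem S'_eq C'_exchange by auto

lemma invariants_after_pivot: "plus_edges_wc C' S'" "minus_edges_wc C' S'"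
  using invariants_after[OF S'_eq S_subset_C' e_in_C' wc_Sup_after wc_Dem_after] by auto

lemma i_d'_notin: "(i, d') \<notin> C - {f}"
  using i_not_reach_d' by (auto simp: r_into_rtranclp)

lemma d'_open: "\<not> wc (Dem d')"
  using f_in_C deleted_edge_unshaded unfolding well_connected_Dem by blast

lemma reach_after_pivot: "reach ((C - {f}) - H) x z \<Longrightarrow> reach (C' - H) x z"
  by (rule reach_mono) (auto simp: C'_exchange)

lemma neighbour_reaches_i_after_pivot:
  assumes r: "(r, d') \<in> C'" and h: "(a, b) \<in> C" "(a, b) \<noteq> (r, d')"
    and side: "\<not> reach (C - {f}) (Dem d') (Sup a)"
  shows "reach (C' - {(a, b)}) (Sup r) (Sup i)"
proof (cases "(r, d') = (i, j)")
  case False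
  have "reach ((C - {f}) - {(a, b)}) (Dem d') (Dem j)"
    using reach_avoid_Sup[OF deleted_edge_sides(2) side] .
  then have "reach (C' - {(a, b)}) (Dem d') (Dem j)" using reach_after_pivot by blast
  moreover have "adj (C' - {(a, b)}) (Dem j) (Sup i)" using e_in_C' h(1) e_notin_C by auto
  moreover have "adj (C' - {(a, b)}) (Sup r) (Dem d')" using r h(2) by auto
  ultimately show ?thesis by (meson converse_rtranclp_into_rtranclp reach_step)
qed simp

text \<open>For an edge \<open>h \<noteq> f\<close> of \<open>C\<close> and a neighbour \<open>\<sigma>\<^sup>r\<close> of \<open>\<delta>\<^sup>d\<^sup>'\<close> in \<open>C'\<close>, an end \<open>w\<close> of \<open>h\<close> on the side of
  \<open>\<sigma>\<^sup>i\<close> in \<open>C - {h}\<close> is on the side of \<open>\<sigma>\<^sup>r\<close> in \<open>C' - {h}\<close>: the pivot only moves the subtree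
  cut off by \<open>f\<close> from \<open>\<sigma>\<^sup>i\<close> to the other side of \<open>(i, j)\<close>.\<close>
lemma reach_end_after_pivot:
  assumes r: "(r, d') \<in> C'" and h: "(a, b) \<in> C" "(a, b) \<noteq> f" "(a, b) \<noteq> (r, d')"
    and w: "w = Sup a \<or> w = Dem b" and iw: "reach (C - {(a, b)}) (Sup i) w"
  shows "reach (C' - {(a, b)}) (Sup r) w"
proof -
  have hw: "reach (C - {f}) (Sup a) w" using w h by auto
  show ?thesis
  proof (cases "reach (C - {f}) (Dem d') (Sup a)")
    case True
    have "\<not> reach (C - {f}) (Sup i) (Sup a)"
      using True i_not_reach_d' reach_sym rtranclp_trans by metis
    then have "reach ((C - {f}) - {(a, b)}) (Sup i) (Sup a')"
      using reach_avoid_Sup[OF deleted_edge_sides(1)] by blast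
    then have "reach (C - {(a, b)}) (Sup i) (Sup a')" by (rule reach_mono) auto
    moreover have "adj (C - {(a, b)}) (Sup a') (Dem d')" using f_in_C h(2) by auto
    ultimately have "reach (C - {(a, b)}) (Dem d') w"
      using iw reach_sym rtranclp_trans reach_step by metis
    moreover have "reach (C - {f}) (Dem d') w" using True hw rtranclp_trans by metis
    ultimately have "reach (C' - {(a, b)}) (Dem d') w"
      using reach_in_subgraph_without_edge[OF C_spanning_tree h(1) _ _ _ w] reach_after_pivot by blast
    moreover have "adj (C' - {(a, b)}) (Sup r) (Dem d')" using r h(3) by auto
    ultimately show ?thesis by (meson converse_rtranclp_into_rtranclp)
  next
    case False
    have "reach (C - {f}) (Sup a') (Sup a)"
      using spanning_tree_two_sides[OF C_spanning_tree f_in_C, of "Sup a"] False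
        spanning_tree_edge_range[OF C_spanning_tree h(1)] by simp
    then have "reach (C - {f}) (Sup i) w" using deleted_edge_sides(1) hw rtranclp_trans by metis
    then have "reach (C' - {(a, b)}) (Sup i) w"
      using reach_in_subgraph_without_edge[OF C_spanning_tree h(1) _ _ iw w] reach_after_pivot by blast
    then show ?thesis
      using neighbour_reaches_i_after_pivot[OF r h(1,3) False] rtranclp_trans by metis
  qed
qed

lemma odd_edge_after_pivot:
  assumes r: "r < N1" "(r, d') \<in> C'" and h: "(a, b) \<in> C" "(a, b) \<noteq> f" "(a, b) \<noteq> (r, d')"
  shows "odd_edge C' r (a, b) \<longleftrightarrow> odd_edge C i (a, b)"
proof -
  have hC': "(a, b) \<in> C'" using h C'_exchange by auto
  have "reach (C - {(a, b)}) (Sup a) (Sup i) \<or> reach (C - {(a, b)}) (Dem b) (Sup i)"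
    using spanning_tree_two_sides[OF C_spanning_tree h(1), of "Sup i"] i by auto
  then obtain w where w: "w = Sup a \<or> w = Dem b" and iw: "reach (C - {(a, b)}) (Sup i) w"
    using reach_sym by blast
  note rw = reach_end_after_pivot[OF r(2) h w iw]
  note odd_C' = odd_edge_iff_reach[OF spanning_tree_C' r(1)]
  from w show ?thesis
  proof
    assume "w = Sup a"
    then show ?thesis using odd_C' odd_edge_C_iff iw rw hC' h(1) by simp
  next
    assume "w = Dem b"
    then have "\<not> reach (C - {(a, b)}) (Sup i) (Sup a)" "\<not> reach (C' - {(a, b)}) (Sup r) (Sup a)"
      using spanning_tree_side_unique[OF C_spanning_tree h(1)]
        spanning_tree_side_unique[OF spanning_tree_C' hC'] iw rw by blast+
    then show ?thesis using odd_C' odd_edge_C_iff by simp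
  qed
qed

lemma e_not_odd_after_pivot:
  assumes "(r, d') \<in> C - {f}" "r < N1"
  shows "\<not> odd_edge C' r (i, j)"
proof
  assume "odd_edge C' r (i, j)"
  then have "reach (C' - {(i, j)}) (Sup r) (Sup i)"
    using odd_edge_iff_reach[OF spanning_tree_C' assms(2)] by simp
  moreover have "C' - {(i, j)} = C - {f}" using C'_exchange e_notin_C by auto
  moreover have "reach (C - {f}) (Sup r) (Dem d')" using assms(1) by (simp add: r_into_rtranclp)
  ultimately show False using i_not_reach_d' reach_sym rtranclp_trans by metis
qed

lemma SIN_after_pivot:
  assumes r: "r < N1" "(r, d') \<in> C'"
    and rd: "(r, d') \<in> S' \<Longrightarrow> minus_edge F ds (r, d') \<and> wc' (Dem d')"
  shows "SIN F ds C' S' r"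
  unfolding SIN_def
proof (intro allI impI)
  fix g assume odd: "odd_edge C' r g"
  show "g \<notin> S' \<or> minus_edge F ds g \<and> wc' (Dem (snd g))"
  proof (cases "g \<in> S' \<and> g \<noteq> (r, d')")
    case True
    then have "g \<noteq> (i, j)"
      using e_not_odd_after_pivot[OF _ r(1)] r(2) C'_exchange odd by auto
    then have gS: "g \<in> S" and "g \<in> C" "g \<noteq> f"
      using True S'_eq S_subset deleted_edge_unshaded by auto
    then have "odd_edge C i g" using odd_edge_after_pivot[OF r] odd True by (cases g) auto
    then show ?thesis using odd_shaded_edge[OF _ gS] wc_Dem_after by auto
  qed (use rd in auto)
qed

lemma unshaded_neighbour_open_after_pivot:
  assumes a: "(a, d') \<in> C' - S'"
  shows "open_node N1 N2 F C' S' (Sup a)"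
proof -
  have "(a, d') \<noteq> (i, j)" using a S'_eq by auto
  then have aC: "(a, d') \<in> C - {f}" using a C'_exchange by auto
  then have ai: "a \<noteq> i" and a_range: "a < N1"
    using i_d'_notin spanning_tree_edge_range[OF C_spanning_tree] by auto
  have "\<not> wc (Sup a)"
  proof
    assume wa: "wc (Sup a)"
    obtain p where p: "plus_edge F ds (a, p)" using plus_edge_exists a_range by blast
    then have pS: "(a, p) \<in> S" using wa unfolding well_connected_Sup plus_edge_def by blast
    then have pC: "(a, p) \<in> C" "(a, p) \<noteq> f" using S_subset deleted_edge_unshaded by auto
    have "(a, p) \<noteq> (a, d')" using pS a S'_eq by auto
    have "(a, p) \<in> C'" using pC C'_exchange by auto
    then have "odd_edge C' a (a, p)" using odd_edge_iff_reach[OF spanning_tree_C' a_range] by simp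
    then have "odd_edge C i (a, p)"
      using odd_edge_after_pivot[OF a_range _ pC \<open>(a, p) \<noteq> (a, d')\<close>] a by auto
    then have "minus_edge F ds (a, p)" using odd_shaded_edge pS by auto
    then show False using p plus_not_minus by blast
  qed
  then show ?thesis using wc_Sup_after[OF ai] a_range unfolding open_node_def by auto
qed

lemma minus_neighbour_open_after_pivot:
  assumes wd: "wc' (Dem d')" and m: "minus_edge F ds (a, d')"
  shows "open_node N1 N2 F C' S' (Sup a) \<and> SIN F ds C' S' a"
proof -
  have aC': "(a, d') \<in> C'"
    using minus_edge_in_tree_if_wc[OF S'_subset invariants_after_pivot pivoted_TP _ f_range(2) wd m]
      C'_def by simp
  have a_range: "a < N1" using spanning_tree_edge_range[OF spanning_tree_C' aC'] by simp
  have "SIN F ds C' S' a" using SIN_after_pivot[OF a_range aC'] m wd by blast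
  moreover have "\<not> wc' (Sup a)"
  proof (cases "(a, d') = (i, j)")
    case True
    then show ?thesis
      using m wc_i_after_iff[OF S'_eq S_subset_C' e_in_C'] plus_not_minus by auto
  next
    case False
    then have "(a, d') \<in> C - {f}" using aC' C'_exchange by auto
    then have "a \<noteq> i" "(a, d') \<in> S"
      using i_d'_notin wd aC' False S'_eq unfolding well_connected_Dem by auto
    then show ?thesis
      using wc_Sup_after invariants_before(2) m d'_open unfolding minus_edges_wc_def by blast
  qed
  ultimately show ?thesis using a_range unfolding open_node_def by auto
qed

lemma shading_outcome_pivot: shading_outcome
proof (rule shading_outcomeI[OF spanning_tree_C' pivoted_TP _ S'_subset invariants_after_pivot f_range(2)])
  show "supp (\<lambda>a b. y a b + t * d a b) = C'" using C'_def by simp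
  show "\<And>d''. (if (i, j) \<in> C then d'' = j else (\<exists>a. (a, d'') \<in> C - C')) \<Longrightarrow> d'' = d'"
    using e_notin_C deleted by auto
next
  fix a assume a: "(a, d') \<in> C' - S'"
  have "a < N1" using a spanning_tree_edge_range[OF spanning_tree_C'] by blast
  then show "open_node N1 N2 F C' S' (Sup a) \<and> SIN F ds C' S' a"
    using unshaded_neighbour_open_after_pivot[OF a] SIN_after_pivot a by blast
next
  fix a assume "\<forall>a'. (a', d') \<notin> C' - S'" and "minus_edge F ds (a, d')"
  then show "open_node N1 N2 F C' S' (Sup a) \<and> SIN F ds C' S' a"
    using minus_neighbour_open_after_pivot unfolding well_connected_Dem by blast
qed

end

lemma (in shading_step) shading_outcome_holds: shading_outcome
proof (cases "(i, j) \<in> C")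
  case True
  interpret in_tree_step N1 N2 u v F ds C S C' S' i j
    by unfold_locales (rule True)
  show ?thesis using shading_outcome_in_tree .
next
  case False
  then obtain y d t where pivot: "is_vertex N1 N2 u v y \<and> supp y = C \<and> supp d \<subseteq> insert (i, j) C \<and>
      d i j = 1 \<and> (\<forall>a b. d a b \<in> {-1, 0, 1}) \<and>
      (\<forall>a<N1. (\<Sum>b<N2. d a b) = 0) \<and> (\<forall>b<N2. (\<Sum>a<N1. d a b) = 0) \<and>
      0 \<le> t \<and> (\<forall>a b. 0 \<le> y a b + t * d a b) \<and> (\<forall>s>t. \<not> (\<forall>a b. 0 \<le> y a b + s * d a b)) \<and>
      C' = supp (\<lambda>a b. y a b + t * d a b)"
    using shade unfolding shade_def pivot_def by auto
  interpret pivot_data N1 N2 u v C C' "(i, j)" y d t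
    by unfold_locales (use pivot False i j in auto)
  obtain a' d' where "C - C' = {(a', d')}" using pivot_deletes_one_edge by auto
  then interpret pivot_step N1 N2 u v F ds C S C' S' i j y d t a' d'
    by unfold_locales
  show ?thesis using shading_outcome_pivot .
qed

theorem lemma5:
  fixes N1 N2 :: nat and u v :: "nat \<Rightarrow> real"
    and F C S C' S' :: "(nat \<times> nat) set" and ds i j :: nat
  assumes "N1 \<ge> 1" and "N2 \<ge> 1"
    and "\<forall>a<N1. u a > 0" and "\<forall>b<N2. v b > 0"
    and "(\<Sum>a<N1. u a) = (\<Sum>b<N2. v b)"
    and "non_degenerate N1 N2 u v"
    and "vertex_tree N1 N2 u v F" and "ds < N2"
    and "vertex_tree N1 N2 u v C" and "S \<subseteq> C \<inter> F"
    and UNO: "UNO N1 N2 F C S"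
    and noplus: "\<forall>e\<in>S. plus_edge F ds e \<longrightarrow> \<not> open_node N1 N2 F C S (Sup (fst e))"
    and "i < N1" and SIN: "SIN F ds C S i"
    and choice: "if (\<exists>j'. (i, j') \<in> F - S \<and> minus_edge F ds (i, j'))
                 then minus_edge F ds (i, j) \<and> (i, j) \<notin> S
                 else plus_edge F ds (i, j)"
    and shade: "shade N1 N2 u v F C S (i, j) C' S'"
  shows
    "(well_connected F C' S' (Dem ds) \<longrightarrow> S' = C' \<and> C' = F) \<and>
     (\<not> well_connected F C' S' (Dem ds) \<longrightarrow>
        S' \<noteq> C' \<and> UNO N1 N2 F C' S' \<and>
        (\<exists>a. open_node N1 N2 F C' S' (Sup a) \<and> SIN F ds C' S' a) \<and>
        (\<forall>d'. (if (i, j) \<in> C then d' = j else (\<exists>a. (a, d') \<in> C - C')) \<longrightarrow>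
           (\<forall>a. (a, d') \<in> C' - S' \<longrightarrow> open_node N1 N2 F C' S' (Sup a) \<and> SIN F ds C' S' a) \<and>
           ((\<forall>a. (a, d') \<notin> C' - S') \<longrightarrow>
              (\<forall>a. minus_edge F ds (a, d') \<longrightarrow> open_node N1 N2 F C' S' (Sup a) \<and> SIN F ds C' S' a))))"
proof -
  interpret shading_step N1 N2 u v F ds C S C' S' i j
    by unfold_locales (use assms in auto)
  show ?thesis
    using shading_outcome_holds unfolding shading_outcome_def shading_continues_def .
qed

end
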